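(* (Uniqueness of bounded positive solutions.) Assume (F1)–(F3). Then the problem $\partial_tU_i=d_i\int_\Omega J_i(x,y)U_i(y,t)\,dy-d_i^*(x)U_i+f_i(x,t,U)$ in $Q_T$, $U_i(x,0)=U_i(x,T)$ on $\bar\Omega$, $i\in\mathbb S$, has at most one bounded positive solution $U$ in $\mathbb Z^m$ (continuity in $x$ is not required).
   Context: $\Omega\subset\mathbb R^N$ is a bounded domain with smooth boundary, $T>0$, $m\ge1$, $\mathbb S=\{1,\dots,m\}$, $Q_T=\bar\Omega\times(0,T]$, $\mathbb R^m_+=\{u\ge0\}$. For vectors: $u\ge v$ componentwise; $u>v$ means $u\ge v$, $u\ne v$; $u\gg v$ means $u_i>v_i$ for all $i$. A positive solution means $U\gg0$ in $\bar Q_T$. $\mathbb Z^m$ is the set of $u\in[L^\infty(Q_T)]^m$ with $u_i(x,\cdot)\in C^1([0,T])$ for every $x\in\bar\Omega$. For each $i$, $d_i>0$, $J_i:\mathbb R^{2N}\to[0,\infty)$ continuous with $J_i(x,x)>0$, $\int_{\mathbb R^N}J_i(x,y)\,dy=1$, and $d_i^*(x)$ is either $d_i$ or $d_i\int_\Omega J_i(y,x)\,dy$. (F1): each $f_i$ is $T$-periodic in $t$, $f_i(x,t,0)=0$, $f_i\in C^{0,0,1}(\bar Q_T\times\mathbb R^m_+)$, and $\partial_{u_k}f_i(x,t,u)\ge0$ for $u\ge0$, $k\ne i$. (F2): there is $(x_0,t_0)\in\bar Q_T$ with $(\partial_{u_k}f_i(x_0,t_0,u))_{m\times m}$ irreducible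 for all $u\ge0$. (F3): $f(x,t,\rho u)>\rho f(x,t,u)$ for all $\rho\in(0,1)$, $(x,t)\in\bar Q_T$, $u\gg0$. *)

theory Defs
  imports "HOL-Analysis.Analysis"
begin

definition vge :: "real^'m \<Rightarrow> real^'m \<Rightarrow> bool" where
  "vge u v \<longleftrightarrow> (\<forall>i. v$i \<le> u$i)"

definition vgt :: "real^'m \<Rightarrow> real^'m \<Rightarrow> bool" where
  "vgt u v \<longleftrightarrow> vge u v \<and> u \<noteq> v"

definition vgg :: "real^'m \<Rightarrow> real^'m \<Rightarrow> bool" where
  "vgg u v \<longleftrightarrow> (\<forall>i. v$i < u$i)"

definition nonneg_orthant :: "(real^'m) set" where
  "nonneg_orthant = {u. \<forall>i. 0 \<le> u$i}"

definition irreducible_matrix :: "('m \<Rightarrow> 'm \<Rightarrow> real) \<Rightarrow> bool" where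
  "irreducible_matrix A \<longleftrightarrow>
     \<not> (\<exists>I. I \<noteq> {} \<and> I \<noteq> UNIV \<and> (\<forall>i\<in>I. \<forall>j. j \<notin> I \<longrightarrow> A i j = 0))"

definition C1_on :: "real set \<Rightarrow> (real \<Rightarrow> real) \<Rightarrow> bool" where
  "C1_on S g \<longleftrightarrow> (\<exists>g'. (\<forall>t\<in>S. (g has_real_derivative g' t) (at t within S))
                         \<and> continuous_on S g')"

definition in_Linf :: "('a::euclidean_space) set \<Rightarrow> ('a \<Rightarrow> real) \<Rightarrow> bool" where
  "in_Linf Q g \<longleftrightarrow> g \<in> borel_measurable (lebesgue_on Q)
                    \<and> (\<exists>C. AE z in lebesgue_on Q. \<bar>g z\<bar> \<le> C)"

definition Z_space :: "(real^'n) set \<Rightarrow> real \<Rightarrow> (real^'n \<Rightarrow> real \<Rightarrow> real^'m) \<Rightarrow> bool" where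
  "Z_space \<Omega> T U \<longleftrightarrow>
     (\<forall>i. in_Linf (closure \<Omega> \<times> {0<..T}) (\<lambda>(x,t). U x t $ i)) \<and>
     (\<forall>x\<in>closure \<Omega>. \<forall>i. C1_on {0..T} (\<lambda>t. U x t $ i))"

definition is_periodic_solution ::
  "(real^'n) set \<Rightarrow> real \<Rightarrow> ('m \<Rightarrow> real) \<Rightarrow> ('m \<Rightarrow> real^'n \<Rightarrow> real^'n \<Rightarrow> real)
   \<Rightarrow> ('m \<Rightarrow> real^'n \<Rightarrow> real) \<Rightarrow> ('m \<Rightarrow> real^'n \<Rightarrow> real \<Rightarrow> real^'m \<Rightarrow> real)
   \<Rightarrow> (real^'n \<Rightarrow> real \<Rightarrow> real^'m) \<Rightarrow> bool" where
  "is_periodic_solution \<Omega> T d J dstar f U \<longleftrightarrow>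
     (\<forall>i. \<forall>x\<in>closure \<Omega>. \<forall>t\<in>{0<..T}.
        set_integrable lebesgue \<Omega> (\<lambda>y. J i x y * U y t $ i)) \<and>
     (\<forall>i. \<forall>x\<in>closure \<Omega>. \<forall>t\<in>{0<..T}.
        ((\<lambda>s. U x s $ i) has_real_derivative
           (d i * (LINT y:\<Omega>|lebesgue. J i x y * U y t $ i)
            - dstar i x * U x t $ i + f i x t (U x t))) (at t within {0..T})) \<and>
     (\<forall>i. \<forall>x\<in>closure \<Omega>. U x 0 $ i = U x T $ i)"

definition bounded_positive :: "(real^'n) set \<Rightarrow> real \<Rightarrow> (real^'n \<Rightarrow> real \<Rightarrow> real^'m) \<Rightarrow> bool" where
  "bounded_positive \<Omega> T U \<longleftrightarrow>
     (\<exists>C. \<forall>x\<in>closure \<Omega>. \<forall>t\<in>{0..T}. norm (U x t) \<le> C) \<and>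
     (\<forall>x\<in>closure \<Omega>. \<forall>t\<in>{0..T}. vgg (U x t) 0)"

end

theory Submission
  imports Defs
begin

text \<open>
  Sliding method. For bounded positive solutions \<open>U\<close>, \<open>V\<close> let \<open>\<rho>\<close> be the largest number
  in \<open>[0, 1]\<close> with \<open>\<rho> V \<le> U\<close>; it suffices to show \<open>\<rho> = 1\<close>, since then \<open>V \<le> U\<close> and,
  by symmetry, \<open>U = V\<close>. If \<open>\<rho> < 1\<close>, every component of the gap \<open>w = U - \<rho> V\<close> is a
  nonnegative periodic solution of \<open>w' + C w = h\<close> for a large constant \<open>C\<close>, where the forcing
  \<open>h\<close> is a sum of nonnegative terms: the nonlocal term \<open>d\<^sub>i \<integral> J\<^sub>i w\<^sub>i\<close>, a
  quasimonotone term from (F1) and \<open>f(\<rho> V) - \<rho> f(V) \<ge> 0\<close> from (F3). Hence \<open>w\<^sub>i(x,\<cdot>)\<close> is either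
  positive on the whole period or \<open>h\<^sub>i(x,\<cdot>)\<close> vanishes, and with it \<open>\<integral> J\<^sub>i(x,\<cdot>) w\<^sub>i\<close>.
  Since \<open>J\<^sub>i\<close> is positive near the diagonal and \<open>\<Omega>\<close> is connected, for each \<open>i\<close> the set
  where \<open>w\<^sub>i\<close> is positive is either null near every point of \<open>\<Omega>\<close> or near none; in the
  second case \<open>w\<^sub>i\<close> is bounded below by a positive constant. Strictness in (F3) excludes that
  all components are of the first kind, irreducibility (F2) that both kinds occur. So all
  gaps are uniformly positive and \<open>\<rho>\<close> could be increased.
\<close>

lemma closed_nonneg_orthant: "closed (nonneg_orthant :: (real^'m) set)"
proof -
  have "nonneg_orthant = (\<Inter>i. {u::real^'m. 0 \<le> u $ i})"
    unfolding nonneg_orthant_def by auto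
  moreover have "closed {u::real^'m. 0 \<le> u $ i}" for i
    by (intro closed_Collect_le continuous_intros)
  ultimately show ?thesis
    by (metis closed_INT)
qed

lemma convex_nonneg_orthant: "convex (nonneg_orthant :: (real^'m) set)"
  unfolding nonneg_orthant_def convex_def by (auto intro!: add_nonneg_nonneg mult_nonneg_nonneg)

lemma not_AE_lebesgue_notin_open:
  fixes G :: "'a::euclidean_space set"
  assumes "open G" "G \<noteq> {}"
  shows "\<not> (AE y in lebesgue. y \<notin> G)"
proof
  assume null: "AE y in lebesgue. y \<notin> G"
  obtain z r where r: "r > 0" "ball z r \<subseteq> G"
    using assms open_contains_ball by blast
  have "AE y in lebesgue. y \<notin> ball z r"
    using null r(2) by (auto elim!: eventually_mono)
  then have "emeasure lebesgue (ball z r) = 0"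
    by (subst (asm) AE_iff_measurable[of "ball z r"]) auto
  then have "measure lborel (ball z r) = 0"
    by (simp add: measure_def measure_completion[symmetric])
  then show False
    using content_ball_pos[OF r(1), of z] by simp
qed

lemma ex_pos_common_finite:
  fixes P :: "'a \<Rightarrow> real \<Rightarrow> bool"
  assumes "finite A" "\<And>i. i \<in> A \<Longrightarrow> \<exists>r>0. P i r"
    and shrink: "\<And>i r r'. P i r \<Longrightarrow> 0 < r' \<Longrightarrow> r' \<le> r \<Longrightarrow> P i r'"
  shows "\<exists>r>0. \<forall>i\<in>A. P i r"
  using assms(1,2)
proof (induction A rule: finite_induct)
  case empty
  show ?case by (rule exI[of _ 1]) simp
next
  case (insert a A)
  then obtain r where "r > 0" "\<forall>i\<in>A. P i r"
    by auto
  moreover obtain r' where "r' > 0" "P a r'"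
    using insert.prems by auto
  ultimately show ?case
    by (intro exI[of _ "min r r'"]) (auto intro: shrink)
qed

lemma abs_set_integral_le_measure:
  fixes g :: "'a::euclidean_space \<Rightarrow> real"
  assumes S: "S \<in> lmeasurable" and c: "0 \<le> c" and bound: "\<And>y. y \<in> S \<Longrightarrow> \<bar>g y\<bar> \<le> c"
  shows "\<bar>LINT y:S|lebesgue. g y\<bar> \<le> c * measure lebesgue S"
proof (cases "set_integrable lebesgue S g")
  case True
  have "\<bar>LINT y:S|lebesgue. g y\<bar> \<le> (LINT y:S|lebesgue. norm (g y))"
    using set_integral_norm_bound[OF True] by simp
  also have "\<dots> \<le> (LINT y:S|lebesgue. c)"
    using set_integrable_norm[OF True] absolutely_integrable_on_const[OF S] bound
    by (intro set_integral_mono) auto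
  also have "\<dots> = c * measure lebesgue S"
    using S by (subst set_integral_const) (auto simp: fmeasurable_def mult.commute)
  finally show ?thesis .
next
  case False
  then have "(LINT y:S|lebesgue. g y) = 0"
    by (simp add: set_lebesgue_integral_def set_integrable_def not_integrable_integral_eq)
  then show ?thesis
    using c by (simp add: measure_nonneg)
qed

lemma dist_set_integral_kernel_le:
  fixes k :: "'a \<Rightarrow> 'b::euclidean_space \<Rightarrow> real"
  assumes S: "S \<in> lmeasurable"
    and int: "set_integrable lebesgue S (\<lambda>y. k x y * \<phi> y)" "set_integrable lebesgue S (\<lambda>y. k x' y * \<phi> y)"
    and k: "\<And>y. y \<in> S \<Longrightarrow> \<bar>k x' y - k x y\<bar> \<le> \<epsilon>" and \<phi>: "\<And>y. y \<in> S \<Longrightarrow> \<bar>\<phi> y\<bar> \<le> M"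
    and nonneg: "0 \<le> \<epsilon>" "0 \<le> M"
  shows "dist (LINT y:S|lebesgue. k x' y * \<phi> y) (LINT y:S|lebesgue. k x y * \<phi> y)
    \<le> \<epsilon> * M * measure lebesgue S"
proof -
  have "dist (LINT y:S|lebesgue. k x' y * \<phi> y) (LINT y:S|lebesgue. k x y * \<phi> y)
      = \<bar>LINT y:S|lebesgue. (k x' y - k x y) * \<phi> y\<bar>"
    using int by (simp add: dist_real_def set_integral_diff left_diff_distrib)
  also have "\<dots> \<le> \<epsilon> * M * measure lebesgue S"
  proof (rule abs_set_integral_le_measure[OF S])
    show "0 \<le> \<epsilon> * M"
      using nonneg by simp
    show "\<bar>(k x' y - k x y) * \<phi> y\<bar> \<le> \<epsilon> * M" if "y \<in> S" for y
      unfolding abs_mult using k[OF that] \<phi>[OF that] nonneg by (intro mult_mono) auto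
  qed
  finally show ?thesis .
qed

lemma continuous_on_set_integral_kernel:
  fixes k :: "'a::metric_space \<Rightarrow> 'b::euclidean_space \<Rightarrow> real"
  assumes compact: "compact X" "compact Y" and S: "S \<subseteq> Y" "S \<in> lmeasurable"
    and k: "continuous_on (X \<times> Y) (\<lambda>(x,y). k x y)"
    and bound: "\<And>y. y \<in> S \<Longrightarrow> \<bar>\<phi> y\<bar> \<le> M"
    and int: "\<And>x. x \<in> X \<Longrightarrow> set_integrable lebesgue S (\<lambda>y. k x y * \<phi> y)"
  shows "continuous_on X (\<lambda>x. LINT y:S|lebesgue. k x y * \<phi> y)"
proof (rule uniformly_continuous_imp_continuous, unfold uniformly_continuous_on_def, intro allI impI)
  fix e :: real
  assume e: "e > 0"
  define M' where "M' = \<bar>M\<bar> + 1"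
  define m where "m = measure lebesgue S"
  have M': "M' > 0" and m: "m \<ge> 0"
    unfolding M'_def m_def by (auto simp: measure_nonneg)
  define e' where "e' = e / (M' * (m + 1))"
  have e': "e' > 0"
    unfolding e'_def using e M' m by auto
  have "uniformly_continuous_on (X \<times> Y) (\<lambda>(x,y). k x y)"
    using compact k by (intro compact_uniformly_continuous compact_Times)
  then obtain \<delta> where \<delta>: "\<delta> > 0" "\<And>p p'. p \<in> X \<times> Y \<Longrightarrow> p' \<in> X \<times> Y \<Longrightarrow> dist p' p < \<delta> \<Longrightarrow>
      dist ((\<lambda>(x,y). k x y) p') ((\<lambda>(x,y). k x y) p) < e'"
    using e' unfolding uniformly_continuous_on_def by metis
  have "dist (LINT y:S|lebesgue. k x' y * \<phi> y) (LINT y:S|lebesgue. k x y * \<phi> y) < e"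
    if x: "x \<in> X" "x' \<in> X" and near: "dist x' x < \<delta>" for x x'
  proof -
    have "dist (LINT y:S|lebesgue. k x' y * \<phi> y) (LINT y:S|lebesgue. k x y * \<phi> y) \<le> e' * M' * m"
      unfolding m_def
    proof (rule dist_set_integral_kernel_le[OF S(2) int[OF x(1)] int[OF x(2)]])
      show "\<bar>k x' y - k x y\<bar> \<le> e'" if "y \<in> S" for y
        using \<delta>(2)[of "(x, y)" "(x', y)"] x that S(1) near by (auto simp: dist_real_def dist_Pair_Pair)
      show "\<bar>\<phi> y\<bar> \<le> M'" if "y \<in> S" for y
        using bound[OF that] unfolding M'_def by auto
    qed (use e' M' in auto)
    also have "\<dots> = e * m / (m + 1)"
      unfolding e'_def using M' m by simp
    also have "\<dots> < e"
      using e m by (simp add: pos_divide_less_eq)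
    finally show ?thesis .
  qed
  with \<delta>(1) show "\<exists>\<delta>>0. \<forall>x\<in>X. \<forall>x'\<in>X. dist x' x < \<delta> \<longrightarrow>
      dist (LINT y:S|lebesgue. k x' y * \<phi> y) (LINT y:S|lebesgue. k x y * \<phi> y) < e"
    by blast
qed

lemma uniform_pos_near_compact:
  fixes \<Phi> :: "'a::metric_space \<times> 'b::metric_space \<Rightarrow> real"
  assumes compact: "compact A" "compact K" and a: "a \<in> A"
    and cont: "continuous_on (A \<times> K) \<Phi>" and pos: "\<And>u. u \<in> K \<Longrightarrow> 0 < \<Phi> (a, u)"
  obtains c \<eta> where "c > 0" "\<eta> > 0" "\<And>b u. b \<in> A \<Longrightarrow> u \<in> K \<Longrightarrow> dist b a < \<eta> \<Longrightarrow> c \<le> \<Phi> (b, u)"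
proof (cases "K = {}")
  case True
  then show ?thesis
    using that[of 1 1] by auto
next
  case False
  have "continuous_on K (\<lambda>u. \<Phi> (a, u))"
    using a by (intro continuous_on_compose2[OF cont] continuous_intros) auto
  then obtain u0 where u0: "u0 \<in> K" "\<And>u. u \<in> K \<Longrightarrow> \<Phi> (a, u0) \<le> \<Phi> (a, u)"
    using continuous_attains_inf[OF compact(2) False] by blast
  define c where "c = \<Phi> (a, u0) / 2"
  have c: "c > 0"
    unfolding c_def using pos[OF u0(1)] by simp
  have "uniformly_continuous_on (A \<times> K) \<Phi>"
    using compact by (intro compact_uniformly_continuous compact_Times cont)
  then obtain \<eta> where \<eta>: "\<eta> > 0"
    "\<And>p p'. p \<in> A \<times> K \<Longrightarrow> p' \<in> A \<times> K \<Longrightarrow> dist p' p < \<eta> \<Longrightarrow> dist (\<Phi> p') (\<Phi> p) < c"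
    using c unfolding uniformly_continuous_on_def by metis
  show ?thesis
  proof (rule that[OF c \<eta>(1)])
    fix b u assume b: "b \<in> A" and u: "u \<in> K" and near: "dist b a < \<eta>"
    have "dist (\<Phi> (b, u)) (\<Phi> (a, u)) < c"
      using \<eta>(2)[of "(a, u)" "(b, u)"] a b u near by (simp add: dist_Pair_Pair)
    moreover have "2 * c \<le> \<Phi> (a, u)"
      using u0(2)[OF u] unfolding c_def by simp
    ultimately show "c \<le> \<Phi> (b, u)"
      unfolding dist_real_def by linarith
  qed
qed

lemma irreducible_block_sum_pos:
  fixes A :: "'m::finite \<Rightarrow> 'm \<Rightarrow> real"
  assumes "irreducible_matrix A" "I \<noteq> {}" "I \<noteq> UNIV"
    and off_diagonal_nonneg: "\<And>j k. j \<noteq> k \<Longrightarrow> 0 \<le> A j k"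
  shows "0 < (\<Sum>j\<in>-I. \<Sum>k\<in>I. A j k)"
proof -
  obtain j k where jk: "j \<in> -I" "k \<in> I" "A j k \<noteq> 0"
    using assms(1-3) unfolding irreducible_matrix_def
    by (metis Compl_empty_eq Compl_eq_Compl_iff Compl_iff)
  have nonneg: "0 \<le> A j' k'" if "j' \<in> -I" "k' \<in> I" for j' k'
  proof -
    have "j' \<noteq> k'"
      using that by auto
    then show ?thesis
      by (rule off_diagonal_nonneg)
  qed
  have "0 < A j k"
    using jk nonneg[OF jk(1,2)] by simp
  also have "\<dots> \<le> (\<Sum>k\<in>I. A j k)"
    using jk nonneg by (intro member_le_sum) auto
  also have "\<dots> \<le> (\<Sum>j\<in>-I. \<Sum>k\<in>I. A j k)"
    using jk nonneg by (intro member_le_sum[where f = "\<lambda>j. \<Sum>k\<in>I. A j k"] sum_nonneg) auto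
  finally show ?thesis .
qed

lemma sum_mean_value_segment:
  fixes F :: "'j \<Rightarrow> real^'m \<Rightarrow> real" and DF :: "'j \<Rightarrow> 'm \<Rightarrow> real^'m \<Rightarrow> real"
  assumes C: "convex C" "a \<in> C" "b \<in> C"
    and deriv: "\<And>j u. j \<in> A \<Longrightarrow> u \<in> C \<Longrightarrow>
      (F j has_derivative (\<lambda>h. \<Sum>k\<in>UNIV. DF j k u * h $ k)) (at u within C)"
  shows "\<exists>p\<in>closed_segment a b.
    (\<Sum>j\<in>A. F j b - F j a) = (\<Sum>j\<in>A. \<Sum>k\<in>UNIV. DF j k p * (b - a) $ k)"
proof -
  define q where "q s = (1 - s) *\<^sub>R a + s *\<^sub>R b" for s :: real
  have q_segment: "q s \<in> closed_segment a b" if "s \<in> {0..1}" for s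
    using that unfolding q_def closed_segment_image_interval by blast
  have q_C: "q s \<in> C" if "s \<in> {0..1}" for s
    using q_segment[OF that] closed_segment_subset[OF C(2,3,1)] by blast
  have "\<exists>\<xi>\<in>{0<..<1}. (\<Sum>j\<in>A. F j (q 1)) - (\<Sum>j\<in>A. F j (q 0))
      = (\<Sum>j\<in>A. \<Sum>k\<in>UNIV. DF j k (q \<xi>) * ((1 - 0) *\<^sub>R (b - a)) $ k)"
  proof (rule mvt_simple)
    fix s :: real assume "0 \<le> s" "s \<le> 1"
    then have s: "s \<in> {0..1}" by simp
    have q_deriv: "(q has_derivative (\<lambda>h. h *\<^sub>R (b - a))) (at s within {0..1})"
      unfolding q_def by (auto intro!: derivative_eq_intros simp: algebra_simps)
    have "((\<lambda>s. F j (q s)) has_derivative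
        (\<lambda>h. \<Sum>k\<in>UNIV. DF j k (q s) * (h *\<^sub>R (b - a)) $ k)) (at s within {0..1})"
      if "j \<in> A" for j
      by (rule has_derivative_in_compose2[of C "F j", OF deriv[OF that] _ s q_deriv])
        (use q_C in auto)
    then show "((\<lambda>s. \<Sum>j\<in>A. F j (q s)) has_derivative
        (\<lambda>h. \<Sum>j\<in>A. \<Sum>k\<in>UNIV. DF j k (q s) * (h *\<^sub>R (b - a)) $ k)) (at s within {0..1})"
      by (rule has_derivative_sum)
  qed simp
  then obtain \<xi> where "\<xi> \<in> {0<..<1}" and "(\<Sum>j\<in>A. F j (q 1)) - (\<Sum>j\<in>A. F j (q 0))
      = (\<Sum>j\<in>A. \<Sum>k\<in>UNIV. DF j k (q \<xi>) * ((1 - 0) *\<^sub>R (b - a)) $ k)"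
    by blast
  then show ?thesis
    using q_segment[of \<xi>] by (intro bexI[of _ "q \<xi>"]) (auto simp: q_def sum_subtractf)
qed

lemma increasing_on_Icc_from_deriv:
  fixes g g' :: "real \<Rightarrow> real"
  assumes cont: "continuous_on {0..T} g"
    and deriv: "\<And>t. t \<in> {0<..T} \<Longrightarrow> (g has_real_derivative g' t) (at t within {0..T})"
    and nonneg: "\<And>t. t \<in> {0<..T} \<Longrightarrow> g' t \<ge> 0"
    and ab: "0 \<le> a" "a \<le> b" "b \<le> T"
  shows "g a \<le> g b"
proof (rule DERIV_nonneg_imp_increasing_open[OF ab(2)])
  fix x assume x: "a < x" "x < b"
  then have "at x within {0..T} = at x"
    using ab by (intro at_within_Icc_at) auto
  moreover have "x \<in> {0<..T}"
    using x ab by auto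
  ultimately show "\<exists>y. (g has_real_derivative y) (at x) \<and> 0 \<le> y"
    using deriv nonneg by metis
next
  show "continuous_on {a..b} g"
    by (rule continuous_on_subset[OF cont]) (use ab in auto)
qed

section \<open>Periodic supersolutions of \<open>w' + K w \<ge> 0\<close>\<close>

locale periodic_supersolution =
  fixes T K :: real and w w' :: "real \<Rightarrow> real"
  assumes T_pos: "T > 0" and K_pos: "K > 0"
    and continuous: "continuous_on {0..T} w"
    and deriv: "\<And>t. t \<in> {0<..T} \<Longrightarrow> (w has_real_derivative w' t) (at t within {0..T})"
    and periodic: "w 0 = w T"
    and nonneg: "\<And>t. t \<in> {0..T} \<Longrightarrow> w t \<ge> 0"
    and supersolution: "\<And>t. t \<in> {0<..T} \<Longrightarrow> w' t + K * w t \<ge> 0"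
begin

lemma exp_weighted_deriv:
  assumes "t \<in> {0<..T}"
  shows "((\<lambda>s. exp (K * s) * w s) has_real_derivative exp (K * t) * (w' t + K * w t))
    (at t within {0..T})"
  using deriv[OF assms] by (auto intro!: derivative_eq_intros simp: algebra_simps)

lemma exp_weighted_mono:
  assumes "0 \<le> a" "a \<le> b" "b \<le> T"
  shows "exp (K * a) * w a \<le> exp (K * b) * w b"
proof (rule increasing_on_Icc_from_deriv[OF _ exp_weighted_deriv _ assms])
  show "continuous_on {0..T} (\<lambda>s. exp (K * s) * w s)"
    by (intro continuous_intros continuous)
  show "0 \<le> exp (K * t) * (w' t + K * w t)" if "t \<in> {0<..T}" for t
    using supersolution[OF that] by simp
qed

lemma exp_end_value_le:
  assumes t: "t \<in> {0..T}"
  shows "exp (- K * T) * w T \<le> w t"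
proof -
  have "w T \<le> exp (K * t) * w t"
    using exp_weighted_mono[of 0 t] periodic t by simp
  then have "exp (- K * t) * w T \<le> w t"
    by (simp add: exp_minus field_simps)
  moreover have "exp (- K * T) * w T \<le> exp (- K * t) * w T"
    using t K_pos nonneg[of T] T_pos by (intro mult_right_mono) auto
  ultimately show ?thesis by linarith
qed

text \<open>A zero of \<open>w\<close> would make \<open>exp (K t) * w t\<close> vanish identically, by monotonicity and
  periodicity.\<close>
lemma pos_if_forcing_pos:
  assumes t1: "t1 \<in> {0<..T}" and forcing: "w' t1 + K * w t1 > 0" and t: "t \<in> {0..T}"
  shows "w t > 0"
proof (rule ccontr)
  define g where "g s = exp (K * s) * w s" for s
  assume "\<not> w t > 0"
  then have "g t = 0"
    using nonneg[OF t] by (simp add: g_def)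
  then have "w T = 0"
    using exp_weighted_mono[of 0 t] nonneg[of 0] periodic t by (simp add: g_def)
  then have g0: "g s = 0" if "s \<in> {0..T}" for s
    using exp_weighted_mono[of s T] that nonneg[of s] by (auto simp: g_def mult_le_0_iff intro: antisym)
  obtain \<delta> where \<delta>: "\<delta> > 0" "\<And>h. h > 0 \<Longrightarrow> t1 - h \<in> {0..T} \<Longrightarrow> h < \<delta> \<Longrightarrow> g (t1 - h) < g t1"
    using has_real_derivative_pos_inc_left[OF exp_weighted_deriv[OF t1]] forcing
    unfolding g_def by auto
  define h where "h = min \<delta> t1 / 2"
  have "h > 0" "h < \<delta>" "t1 - h \<in> {0..T}"
    using \<delta>(1) t1 unfolding h_def by auto
  then show False
    using \<delta>(2) g0[of "t1 - h"] g0[of t1] t1 by fastforce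
qed

lemma lower_bound_if_forcing_ge:
  assumes a: "a > 0" and forcing: "\<And>t. t \<in> {0<..T} \<Longrightarrow> w' t + K * w t \<ge> a"
    and t: "t \<in> {0..T}"
  shows "exp (- K * T) * (a * T / (exp (K * T) - 1)) \<le> w t"
proof -
  have "exp (K * 0) * w 0 - a * 0 \<le> exp (K * T) * w T - a * T"
  proof (rule increasing_on_Icc_from_deriv[where g = "\<lambda>s. exp (K * s) * w s - a * s"
        and g' = "\<lambda>s. exp (K * s) * (w' s + K * w s) - a"])
    fix s assume s: "s \<in> {0<..T}"
    show "((\<lambda>s. exp (K * s) * w s - a * s) has_real_derivative
        exp (K * s) * (w' s + K * w s) - a) (at s within {0..T})"
      using exp_weighted_deriv[OF s] by (rule DERIV_diff) (auto intro!: derivative_eq_intros)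
    have "1 \<le> exp (K * s)"
      using s K_pos by simp
    then have "1 * a \<le> exp (K * s) * (w' s + K * w s)"
      using forcing[OF s] a by (intro mult_mono) auto
    then show "exp (K * s) * (w' s + K * w s) - a \<ge> 0" by simp
  next
    show "continuous_on {0..T} (\<lambda>s. exp (K * s) * w s - a * s)"
      by (intro continuous_intros continuous)
  qed (use T_pos in auto)
  then have "a * T \<le> w T * (exp (K * T) - 1)"
    using periodic by (simp add: algebra_simps)
  moreover have "exp (K * T) - 1 > 0"
    using K_pos T_pos by auto
  ultimately have "a * T / (exp (K * T) - 1) \<le> w T"
    by (simp add: pos_divide_le_eq)
  then have "exp (- K * T) * (a * T / (exp (K * T) - 1)) \<le> exp (- K * T) * w T"
    by (intro mult_left_mono) auto
  also have "\<dots> \<le> w t"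
    using exp_end_value_le[OF t] .
  finally show ?thesis .
qed

end

section \<open>Two bounded positive periodic solutions\<close>

locale solution_pair =
  fixes \<Omega> :: "(real^'n) set" and T :: real
    and d :: "'m::finite \<Rightarrow> real"
    and J :: "'m \<Rightarrow> real^'n \<Rightarrow> real^'n \<Rightarrow> real"
    and dstar :: "'m \<Rightarrow> real^'n \<Rightarrow> real"
    and f :: "'m \<Rightarrow> real^'n \<Rightarrow> real \<Rightarrow> real^'m \<Rightarrow> real"
    and Df :: "'m \<Rightarrow> 'm \<Rightarrow> real^'n \<Rightarrow> real \<Rightarrow> real^'m \<Rightarrow> real"
    and U V :: "real^'n \<Rightarrow> real \<Rightarrow> real^'m"
  assumes dom: "open \<Omega>" "connected \<Omega>" "bounded \<Omega>" "\<Omega> \<noteq> {}"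
    and T_pos: "T > 0"
    and d_pos: "\<And>i. d i > 0"
    and J_cont: "\<And>i. continuous_on UNIV (\<lambda>(x,y). J i x y)"
    and J_nonneg: "\<And>i x y. J i x y \<ge> 0"
    and J_diag: "\<And>i x. J i x x > 0"
    and dstar_def: "\<And>i. dstar i = (\<lambda>x. d i)
                       \<or> dstar i = (\<lambda>x. d i * (LINT y:\<Omega>|lebesgue. J i y x))"
    and F1_zero: "\<And>i x t. f i x t 0 = 0"
    and F1_Dcont: "\<And>i k. continuous_on (closure \<Omega> \<times> {0..T} \<times> nonneg_orthant)
                         (\<lambda>(x,t,u). Df i k x t u)"
    and F1_deriv: "\<And>i x t u. x \<in> closure \<Omega> \<Longrightarrow> t \<in> {0..T} \<Longrightarrow> u \<in> nonneg_orthant \<Longrightarrow>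
                     (f i x t has_derivative (\<lambda>h. \<Sum>k\<in>UNIV. Df i k x t u * h $ k))
                       (at u within nonneg_orthant)"
    and F1_coop: "\<And>i k x t u. x \<in> closure \<Omega> \<Longrightarrow> t \<in> {0..T} \<Longrightarrow> u \<in> nonneg_orthant \<Longrightarrow>
                     k \<noteq> i \<Longrightarrow> Df i k x t u \<ge> 0"
    and F2: "\<exists>x0\<in>closure \<Omega>. \<exists>t0\<in>{0..T}. \<forall>u\<in>nonneg_orthant.
               irreducible_matrix (\<lambda>i k. Df i k x0 t0 u)"
    and F3: "\<And>\<rho> x t u. 0 < \<rho> \<Longrightarrow> \<rho> < 1 \<Longrightarrow> x \<in> closure \<Omega> \<Longrightarrow> t \<in> {0..T} \<Longrightarrow>
               vgg u 0 \<Longrightarrow> vgt (\<chi> i. f i x t (\<rho> *\<^sub>R u)) (\<rho> *\<^sub>R (\<chi> i. f i x t u))"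
    and U_Z: "Z_space \<Omega> T U" and U_sol: "is_periodic_solution \<Omega> T d J dstar f U"
    and U_bp: "bounded_positive \<Omega> T U"
    and V_Z: "Z_space \<Omega> T V" and V_sol: "is_periodic_solution \<Omega> T d J dstar f V"
    and V_bp: "bounded_positive \<Omega> T V"
begin

definition conv :: "'m \<Rightarrow> (real^'n \<Rightarrow> real) \<Rightarrow> real^'n \<Rightarrow> real" where
  "conv i \<phi> x = (LINT y:\<Omega>|lebesgue. J i x y * \<phi> y)"

lemma Omega_lmeasurable: "\<Omega> \<in> lmeasurable"
  using dom by (intro lmeasurable_open) auto

lemma compact_closure_Omega: "compact (closure \<Omega>)"
  using dom(3) by (simp add: compact_closure)

context
  fixes Z assumes Z: "Z \<in> {U, V}"
begin

lemma solution_Z_space: "Z_space \<Omega> T Z"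
  and solution_periodic_solution: "is_periodic_solution \<Omega> T d J dstar f Z"
  and solution_bounded_positive: "bounded_positive \<Omega> T Z"
  using Z U_Z U_sol U_bp V_Z V_sol V_bp by auto

lemma solution_continuous:
  assumes "x \<in> closure \<Omega>"
  shows "continuous_on {0..T} (\<lambda>t. Z x t $ i)"
proof -
  obtain g' where "\<And>t. t \<in> {0..T} \<Longrightarrow> ((\<lambda>t. Z x t $ i) has_real_derivative g' t) (at t within {0..T})"
    using solution_Z_space assms unfolding Z_space_def C1_on_def by blast
  then show ?thesis
    by (rule DERIV_continuous_on)
qed

lemma solution_integrable:
  "x \<in> closure \<Omega> \<Longrightarrow> t \<in> {0<..T} \<Longrightarrow> set_integrable lebesgue \<Omega> (\<lambda>y. J i x y * Z y t $ i)"
  using solution_periodic_solution unfolding is_periodic_solution_def by blast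

lemma solution_deriv:
  "x \<in> closure \<Omega> \<Longrightarrow> t \<in> {0<..T} \<Longrightarrow> ((\<lambda>s. Z x s $ i) has_real_derivative
     d i * conv i (\<lambda>y. Z y t $ i) x - dstar i x * Z x t $ i + f i x t (Z x t)) (at t within {0..T})"
  using solution_periodic_solution unfolding is_periodic_solution_def conv_def by blast

lemma solution_periodic: "x \<in> closure \<Omega> \<Longrightarrow> Z x 0 $ i = Z x T $ i"
  using solution_periodic_solution unfolding is_periodic_solution_def by blast

lemma solution_pos: "x \<in> closure \<Omega> \<Longrightarrow> t \<in> {0..T} \<Longrightarrow> vgg (Z x t) 0"
  using solution_bounded_positive unfolding bounded_positive_def by blast

lemma solution_component_pos: "x \<in> closure \<Omega> \<Longrightarrow> t \<in> {0..T} \<Longrightarrow> Z x t $ i > 0"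
  using solution_pos unfolding vgg_def by simp

end

lemma solutions_bounded:
  "\<exists>B>0. \<forall>x\<in>closure \<Omega>. \<forall>t\<in>{0..T}. norm (U x t) \<le> B \<and> norm (V x t) \<le> B"
proof -
  obtain B1 where B1: "\<forall>x\<in>closure \<Omega>. \<forall>t\<in>{0..T}. norm (U x t) \<le> B1"
    using U_bp unfolding bounded_positive_def by blast
  obtain B2 where B2: "\<forall>x\<in>closure \<Omega>. \<forall>t\<in>{0..T}. norm (V x t) \<le> B2"
    using V_bp unfolding bounded_positive_def by blast
  have "norm (U x t) \<le> max 1 (max B1 B2) \<and> norm (V x t) \<le> max 1 (max B1 B2)"
    if "x \<in> closure \<Omega>" "t \<in> {0..T}" for x t
    using B1 B2 that by (meson le_max_iff_disj)
  then show ?thesis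
    by (intro exI[of _ "max 1 (max B1 B2)"]) auto
qed

definition bound :: real where
  "bound = (SOME B. B > 0 \<and> (\<forall>x\<in>closure \<Omega>. \<forall>t\<in>{0..T}. norm (U x t) \<le> B \<and> norm (V x t) \<le> B))"

lemma bound_pos: "bound > 0"
  and norm_le_bound: "Z \<in> {U, V} \<Longrightarrow> x \<in> closure \<Omega> \<Longrightarrow> t \<in> {0..T} \<Longrightarrow> norm (Z x t) \<le> bound"
  using someI_ex[OF solutions_bounded] unfolding bound_def[symmetric] by auto

lemma component_le_bound:
  assumes "Z \<in> {U, V}" "x \<in> closure \<Omega>" "t \<in> {0..T}"
  shows "Z x t $ i \<le> bound"
  using norm_le_bound[OF assms] component_le_norm_cart[of "Z x t" i] by linarith

definition value_box :: "(real^'m) set" where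
  "value_box = nonneg_orthant \<inter> cball 0 bound"

lemma compact_value_box: "compact value_box"
  unfolding value_box_def using closed_nonneg_orthant by (intro closed_Int_compact) auto

lemma convex_value_box: "convex value_box"
  unfolding value_box_def by (intro convex_Int convex_nonneg_orthant convex_cball)

lemma value_box_nonneg: "u \<in> value_box \<Longrightarrow> u \<in> nonneg_orthant"
  unfolding value_box_def by auto

lemma Df_bounded:
  "\<exists>L\<ge>0. \<forall>i k. \<forall>x\<in>closure \<Omega>. \<forall>t\<in>{0..T}. \<forall>u\<in>value_box. \<bar>Df i k x t u\<bar> \<le> L"
proof -
  have "continuous_on (closure \<Omega> \<times> {0..T} \<times> value_box) (\<lambda>(x,t,u). Df i k x t u)" for i k
    by (rule continuous_on_subset[OF F1_Dcont]) (auto simp: value_box_def)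
  then have "continuous_on (closure \<Omega> \<times> {0..T} \<times> value_box) (\<lambda>(x,t,u). \<chi> i k. Df i k x t u)"
    unfolding case_prod_beta by (intro continuous_on_vec_lambda)
  moreover have "compact (closure \<Omega> \<times> {0..T} \<times> value_box)"
    using compact_closure_Omega compact_value_box by (intro compact_Times compact_Icc)
  ultimately obtain L where "L \<ge> 0"
    and L: "\<And>p. p \<in> closure \<Omega> \<times> {0..T} \<times> value_box \<Longrightarrow> norm ((\<lambda>(x,t,u). \<chi> i k. Df i k x t u) p) \<le> L"
    using continuous_on_compact_bound by blast
  have "\<bar>Df i k x t u\<bar> \<le> L" if "x \<in> closure \<Omega>" "t \<in> {0..T}" "u \<in> value_box" for i k x t u
  proof -
    have "\<bar>Df i k x t u\<bar> \<le> norm (\<chi> k. Df i k x t u)"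
      using component_le_norm_cart[of "\<chi> k. Df i k x t u" k] by simp
    also have "\<dots> \<le> norm (\<chi> i k. Df i k x t u)"
      using Finite_Cartesian_Product.norm_nth_le[of "\<chi> i k. Df i k x t u" i] by simp
    also have "\<dots> \<le> L"
      using L[of "(x, t, u)"] that by simp
    finally show ?thesis .
  qed
  with \<open>L \<ge> 0\<close> show ?thesis by blast
qed

definition Df_bound :: real where
  "Df_bound = (SOME L. L \<ge> 0 \<and>
     (\<forall>i k. \<forall>x\<in>closure \<Omega>. \<forall>t\<in>{0..T}. \<forall>u\<in>value_box. \<bar>Df i k x t u\<bar> \<le> L))"

lemma Df_bound_nonneg: "Df_bound \<ge> 0"
  and abs_Df_le_Df_bound:
    "x \<in> closure \<Omega> \<Longrightarrow> t \<in> {0..T} \<Longrightarrow> u \<in> value_box \<Longrightarrow> \<bar>Df i k x t u\<bar> \<le> Df_bound"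
  using someI_ex[OF Df_bounded] unfolding Df_bound_def[symmetric] by auto

lemma J_bounded: obtains M where "\<And>i x y. x \<in> closure \<Omega> \<Longrightarrow> y \<in> closure \<Omega> \<Longrightarrow> \<bar>J i x y\<bar> \<le> M"
proof -
  have "continuous_on (closure \<Omega> \<times> closure \<Omega>) (\<lambda>(x,y). \<chi> i. J i x y)"
    using continuous_on_subset[OF J_cont] by (auto simp: case_prod_beta intro!: continuous_on_vec_lambda)
  moreover have "compact (closure \<Omega> \<times> closure \<Omega>)"
    using compact_closure_Omega by (intro compact_Times)
  ultimately obtain M where "\<And>p. p \<in> closure \<Omega> \<times> closure \<Omega> \<Longrightarrow> norm ((\<lambda>(x,y). \<chi> i. J i x y) p) \<le> M"
    using continuous_on_compact_bound by blast
  then have "\<bar>J i x y\<bar> \<le> M" if "x \<in> closure \<Omega>" "y \<in> closure \<Omega>" for i x y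
    using that component_le_norm_cart[of "\<chi> i. J i x y" i] by fastforce
  then show ?thesis using that by blast
qed

lemma dstar_bounded: "\<exists>D. \<forall>i. \<forall>x\<in>closure \<Omega>. dstar i x \<le> D"
proof -
  obtain M where M: "\<And>i x y. x \<in> closure \<Omega> \<Longrightarrow> y \<in> closure \<Omega> \<Longrightarrow> \<bar>J i x y\<bar> \<le> M"
    using J_bounded by blast
  obtain x0 where "x0 \<in> closure \<Omega>"
    using dom(4) closure_subset by blast
  then have "M \<ge> 0"
    using M[of x0 x0] by (meson abs_ge_zero order_trans)
  define D where "D = (\<Sum>i\<in>UNIV. d i) * (1 + M * measure lebesgue \<Omega>)"
  have "dstar i x \<le> D" if x: "x \<in> closure \<Omega>" for i x
  proof -
    have "\<bar>LINT y:\<Omega>|lebesgue. J i y x\<bar> \<le> M * measure lebesgue \<Omega>"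
      by (rule abs_set_integral_le_measure[OF Omega_lmeasurable \<open>M \<ge> 0\<close>])
        (meson M x closure_subset subsetD)
    then have bound: "max 1 (LINT y:\<Omega>|lebesgue. J i y x) \<le> 1 + M * measure lebesgue \<Omega>"
      using \<open>M \<ge> 0\<close> by (auto simp: measure_nonneg)
    have "dstar i x \<le> d i * max 1 (LINT y:\<Omega>|lebesgue. J i y x)"
      using dstar_def[of i] d_pos[of i] by (auto intro: mult_left_mono)
    also have "\<dots> \<le> d i * (1 + M * measure lebesgue \<Omega>)"
      using bound d_pos[of i] by (intro mult_left_mono) auto
    also have "\<dots> \<le> D"
      unfolding D_def using d_pos bound
      by (intro mult_right_mono member_le_sum) (auto intro: less_imp_le order_trans[OF _ bound])
    finally show ?thesis .
  qed
  then show ?thesis by blast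
qed

text \<open>Large enough that \<open>(rate - dstar i x) * w\<^sub>i\<close> dominates the diagonal part of the
  reaction term in the equation for the gap \<open>w = U - \<rho> V\<close>.\<close>
definition rate :: real where
  "rate = (SOME C. C > 0 \<and> (\<forall>i. \<forall>x\<in>closure \<Omega>. dstar i x + Df_bound \<le> C))"

lemma rate_pos: "rate > 0"
  and dstar_le_rate: "x \<in> closure \<Omega> \<Longrightarrow> dstar i x + Df_bound \<le> rate"
proof -
  obtain D where D: "\<And>i x. x \<in> closure \<Omega> \<Longrightarrow> dstar i x \<le> D"
    using dstar_bounded by blast
  have "dstar i x + Df_bound \<le> \<bar>D\<bar> + Df_bound + 1" if "x \<in> closure \<Omega>" for i x
    using D[OF that, of i] by linarith
  then have "\<exists>C>0. \<forall>i. \<forall>x\<in>closure \<Omega>. dstar i x + Df_bound \<le> C"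
    using Df_bound_nonneg by (intro exI[of _ "\<bar>D\<bar> + Df_bound + 1"]) auto
  from someI_ex[OF this] show "rate > 0" "x \<in> closure \<Omega> \<Longrightarrow> dstar i x + Df_bound \<le> rate"
    unfolding rate_def[symmetric] by auto
qed

lemma J_pos_near_diag: "\<exists>r>0. \<forall>y\<in>ball x r. J i x y > 0"
proof -
  have "continuous_on UNIV (\<lambda>y. (\<lambda>(x,y). J i x y) (x, y))"
    by (intro continuous_on_compose2[OF J_cont] continuous_intros) auto
  then have "open {y. 0 < J i x y}"
    using open_Collect_less[OF continuous_on_const] by simp
  then obtain r where "r > 0" "ball x r \<subseteq> {y. 0 < J i x y}"
    using J_diag[of i x] open_contains_ball by blast
  then show ?thesis by blast
qed

lemma conv_continuous:
  assumes "\<And>y. y \<in> \<Omega> \<Longrightarrow> \<bar>\<phi> y\<bar> \<le> M"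
    and "\<And>x. x \<in> closure \<Omega> \<Longrightarrow> set_integrable lebesgue \<Omega> (\<lambda>y. J i x y * \<phi> y)"
  shows "continuous_on (closure \<Omega>) (conv i \<phi>)"
  unfolding conv_def
  using compact_closure_Omega closure_subset Omega_lmeasurable continuous_on_subset[OF J_cont] assms
  by (intro continuous_on_set_integral_kernel[where Y = "closure \<Omega>"]) auto

lemma conv_nonneg: "(\<And>y. y \<in> \<Omega> \<Longrightarrow> \<phi> y \<ge> 0) \<Longrightarrow> conv i \<phi> x \<ge> 0"
  unfolding conv_def set_lebesgue_integral_def
  using J_nonneg by (intro integral_nonneg_AE AE_I2) (auto simp: indicator_def)

lemma conv_pos:
  assumes nonneg: "\<And>y. y \<in> \<Omega> \<Longrightarrow> \<phi> y \<ge> 0"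
    and int: "set_integrable lebesgue \<Omega> (\<lambda>y. J i x y * \<phi> y)"
    and J_pos: "\<And>y. y \<in> ball z r \<Longrightarrow> J i x y > 0"
    and not_null: "\<not> (AE y in lebesgue. y \<in> \<Omega> \<inter> ball z r \<longrightarrow> \<phi> y = 0)"
  shows "conv i \<phi> x > 0"
proof (rule ccontr)
  define g where "g y = indicator \<Omega> y *\<^sub>R (J i x y * \<phi> y)" for y
  assume "\<not> conv i \<phi> x > 0"
  then have "integral\<^sup>L lebesgue g = 0"
    using conv_nonneg[OF nonneg] unfolding conv_def set_lebesgue_integral_def g_def
    by (meson linorder_not_le order_antisym)
  moreover have "integrable lebesgue g"
    using int unfolding g_def set_integrable_def .
  moreover have "AE y in lebesgue. 0 \<le> g y"
    using J_nonneg nonneg unfolding g_def by (intro AE_I2) (auto simp: indicator_def)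
  ultimately have "AE y in lebesgue. g y = 0"
    using integral_nonneg_eq_0_iff_AE by blast
  then have "AE y in lebesgue. y \<in> \<Omega> \<inter> ball z r \<longrightarrow> \<phi> y = 0"
  proof (rule eventually_mono)
    fix y assume "g y = 0"
    then show "y \<in> \<Omega> \<inter> ball z r \<longrightarrow> \<phi> y = 0"
      using J_pos[of y] by (auto simp: g_def)
  qed
  with not_null show False ..
qed

lemma conv_cmult: "conv i (\<lambda>y. c * \<phi> y) x = c * conv i \<phi> x"
  unfolding conv_def by (simp add: mult.left_commute)

lemma conv_mono:
  assumes "set_integrable lebesgue \<Omega> (\<lambda>y. J i x y * \<phi> y)" "set_integrable lebesgue \<Omega> (\<lambda>y. J i x y * \<psi> y)"
    and "\<And>y. y \<in> \<Omega> \<Longrightarrow> \<phi> y \<le> \<psi> y"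
  shows "conv i \<phi> x \<le> conv i \<psi> x"
  unfolding conv_def using assms J_nonneg by (intro set_integral_mono mult_left_mono) auto

end

section \<open>The gap \<open>U - \<rho> V\<close>\<close>

locale solution_pair_below = solution_pair \<Omega> T d J dstar f Df U V
  for \<Omega> :: "(real^'n) set" and T d and J :: "'m::finite \<Rightarrow> real^'n \<Rightarrow> real^'n \<Rightarrow> real"
    and dstar f Df U V +
  fixes \<rho> :: real
  assumes rho_nonneg: "0 \<le> \<rho>" and rho_less_one: "\<rho> < 1"
    and scaled_below: "\<And>x t i. x \<in> closure \<Omega> \<Longrightarrow> t \<in> {0..T} \<Longrightarrow> \<rho> * V x t $ i \<le> U x t $ i"
begin

definition gap :: "'m \<Rightarrow> real^'n \<Rightarrow> real \<Rightarrow> real" where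
  "gap i x t = U x t $ i - \<rho> * V x t $ i"

definition gap_forcing :: "'m \<Rightarrow> real^'n \<Rightarrow> real \<Rightarrow> real" where
  "gap_forcing i x t = d i * conv i (\<lambda>y. gap i y t) x + (rate - dstar i x) * gap i x t
     + (f i x t (U x t) - \<rho> * f i x t (V x t))"

definition gap_positive :: "'m \<Rightarrow> real^'n \<Rightarrow> bool" where
  "gap_positive i x \<longleftrightarrow> (\<forall>t\<in>{0..T}. 0 < gap i x t)"

definition positive_set_null_near :: "'m \<Rightarrow> real^'n \<Rightarrow> bool" where
  "positive_set_null_near i x \<longleftrightarrow>
     (\<exists>r>0. AE y in lebesgue. y \<in> \<Omega> \<inter> ball x r \<longrightarrow> \<not> gap_positive i y)"

lemma gap_nonneg: "x \<in> closure \<Omega> \<Longrightarrow> t \<in> {0..T} \<Longrightarrow> 0 \<le> gap i x t"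
  using scaled_below unfolding gap_def by auto

lemma gap_le_bound:
  assumes "x \<in> closure \<Omega>" "t \<in> {0..T}"
  shows "gap i x t \<le> bound"
proof -
  have "0 \<le> \<rho> * V x t $ i"
    using rho_nonneg solution_component_pos[of V x t i] assms by simp
  then show ?thesis
    using component_le_bound[of U x t i] assms unfolding gap_def by simp
qed

lemma J_gap: "J i x y * gap i y t = J i x y * U y t $ i - \<rho> * (J i x y * V y t $ i)"
  unfolding gap_def by (simp add: algebra_simps)

lemma gap_integrable:
  assumes "x \<in> closure \<Omega>" "t \<in> {0<..T}"
  shows "set_integrable lebesgue \<Omega> (\<lambda>y. J i x y * gap i y t)"
  unfolding J_gap
  using solution_integrable[of U, OF _ assms] solution_integrable[of V, OF _ assms] by simp

lemma conv_gap:
  assumes "x \<in> closure \<Omega>" "t \<in> {0<..T}"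
  shows "conv i (\<lambda>y. gap i y t) x = conv i (\<lambda>y. U y t $ i) x - \<rho> * conv i (\<lambda>y. V y t $ i) x"
  unfolding conv_def J_gap
  using solution_integrable[of U, OF _ assms] solution_integrable[of V, OF _ assms]
  by (simp add: set_integral_diff)

lemma gap_fun: "gap i x = (\<lambda>s. U x s $ i - \<rho> * V x s $ i)"
  by (simp add: fun_eq_iff gap_def)

lemma gap_continuous: "x \<in> closure \<Omega> \<Longrightarrow> continuous_on {0..T} (gap i x)"
  unfolding gap_fun by (intro continuous_intros solution_continuous) auto

lemma gap_periodic: "x \<in> closure \<Omega> \<Longrightarrow> gap i x 0 = gap i x T"
  unfolding gap_def using solution_periodic[of U] solution_periodic[of V] by simp

lemma gap_deriv:
  assumes "x \<in> closure \<Omega>" "t \<in> {0<..T}"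
  shows "(gap i x has_real_derivative gap_forcing i x t - rate * gap i x t) (at t within {0..T})"
proof -
  have "(d i * conv i (\<lambda>y. U y t $ i) x - dstar i x * U x t $ i + f i x t (U x t))
      - \<rho> * (d i * conv i (\<lambda>y. V y t $ i) x - dstar i x * V x t $ i + f i x t (V x t))
      = gap_forcing i x t - rate * gap i x t"
    unfolding gap_forcing_def conv_gap[OF assms] by (simp add: gap_def algebra_simps)
  moreover have "((\<lambda>s. U x s $ i - \<rho> * V x s $ i) has_real_derivative
      (d i * conv i (\<lambda>y. U y t $ i) x - dstar i x * U x t $ i + f i x t (U x t))
      - \<rho> * (d i * conv i (\<lambda>y. V y t $ i) x - dstar i x * V x t $ i + f i x t (V x t)))
      (at t within {0..T})"
    using solution_deriv[of U, OF _ assms] solution_deriv[of V, OF _ assms]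
    by (intro DERIV_diff DERIV_cmult) auto
  ultimately show ?thesis
    unfolding gap_fun by simp
qed

lemma values_in_value_box:
  assumes "x \<in> closure \<Omega>" "t \<in> {0..T}"
  shows "U x t \<in> value_box" and "\<rho> *\<^sub>R V x t \<in> value_box"
proof -
  have "norm (\<rho> *\<^sub>R V x t) \<le> norm (V x t)"
    using rho_nonneg rho_less_one by (simp add: mult_left_le_one_le)
  moreover have "0 \<le> U x t $ i" "0 \<le> \<rho> * V x t $ i" for i
    using rho_nonneg solution_component_pos[of U x t i] solution_component_pos[of V x t i] assms
    by simp_all
  ultimately show "U x t \<in> value_box" "\<rho> *\<^sub>R V x t \<in> value_box"
    using norm_le_bound[of U x t] norm_le_bound[of V x t] assms
    unfolding value_box_def nonneg_orthant_def by auto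
qed

lemma f_diff_eq_Df_sum:
  assumes x: "x \<in> closure \<Omega>" and t: "t \<in> {0..T}"
  obtains p where "p \<in> value_box"
    "(\<Sum>j\<in>A. f j x t (U x t) - f j x t (\<rho> *\<^sub>R V x t)) = (\<Sum>j\<in>A. \<Sum>k\<in>UNIV. Df j k x t p * gap k x t)"
proof -
  note box = values_in_value_box[OF x t]
  obtain p where p: "p \<in> closed_segment (\<rho> *\<^sub>R V x t) (U x t)"
    and eq: "(\<Sum>j\<in>A. f j x t (U x t) - f j x t (\<rho> *\<^sub>R V x t))
      = (\<Sum>j\<in>A. \<Sum>k\<in>UNIV. Df j k x t p * (U x t - \<rho> *\<^sub>R V x t) $ k)"
    using sum_mean_value_segment[OF convex_nonneg_orthant value_box_nonneg[OF box(2)]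
        value_box_nonneg[OF box(1)], of A "\<lambda>j. f j x t" "\<lambda>j k. Df j k x t"] F1_deriv[OF x t]
    by blast
  show thesis
  proof (rule that)
    show "p \<in> value_box"
      using p closed_segment_subset[OF box(2,1) convex_value_box] by blast
    show "(\<Sum>j\<in>A. f j x t (U x t) - f j x t (\<rho> *\<^sub>R V x t)) = (\<Sum>j\<in>A. \<Sum>k\<in>UNIV. Df j k x t p * gap k x t)"
      unfolding eq by (simp add: gap_def)
  qed
qed

lemma Df_row_ge:
  assumes x: "x \<in> closure \<Omega>" and t: "t \<in> {0..T}" and p: "p \<in> value_box" and j: "j \<notin> I"
  shows "- Df_bound * gap j x t + (\<Sum>k\<in>I. Df j k x t p * gap k x t)
    \<le> (\<Sum>k\<in>UNIV. Df j k x t p * gap k x t)"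
proof -
  have "(\<Sum>k\<in>I. Df j k x t p * gap k x t) \<le> (\<Sum>k\<in>UNIV - {j}. Df j k x t p * gap k x t)"
    using j F1_coop[OF x t value_box_nonneg[OF p]] gap_nonneg[OF x t]
    by (intro sum_mono2) auto
  moreover have "- Df_bound * gap j x t \<le> Df j j x t p * gap j x t"
    using abs_Df_le_Df_bound[OF x t p, of j j] gap_nonneg[OF x t, of j]
    by (intro mult_right_mono) auto
  moreover have "(\<Sum>k\<in>UNIV. Df j k x t p * gap k x t)
      = Df j j x t p * gap j x t + (\<Sum>k\<in>UNIV - {j}. Df j k x t p * gap k x t)"
    by (subst sum.remove[of UNIV j]) auto
  ultimately show ?thesis
    by linarith
qed

lemma f_diff_ge:
  assumes "x \<in> closure \<Omega>" "t \<in> {0..T}"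
  shows "0 \<le> f i x t (U x t) - f i x t (\<rho> *\<^sub>R V x t) + Df_bound * gap i x t"
proof -
  obtain p where "p \<in> value_box" and "(\<Sum>j\<in>{i}. f j x t (U x t) - f j x t (\<rho> *\<^sub>R V x t))
      = (\<Sum>j\<in>{i}. \<Sum>k\<in>UNIV. Df j k x t p * gap k x t)"
    by (rule f_diff_eq_Df_sum[OF assms])
  then show ?thesis
    using Df_row_ge[OF assms \<open>p \<in> value_box\<close>, of i "{}"] by simp
qed

lemma f_scaling_ge:
  assumes "x \<in> closure \<Omega>" "t \<in> {0..T}"
  shows "0 \<le> f i x t (\<rho> *\<^sub>R V x t) - \<rho> * f i x t (V x t)"
proof (cases "\<rho> = 0")
  case True
  then show ?thesis
    using F1_zero by simp
next
  case False
  then have "vgt (\<chi> i. f i x t (\<rho> *\<^sub>R V x t)) (\<rho> *\<^sub>R (\<chi> i. f i x t (V x t)))"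
    using rho_nonneg rho_less_one assms solution_pos[of V] by (intro F3) auto
  then show ?thesis
    unfolding vgt_def vge_def by auto
qed

lemma conv_gap_nonneg: "t \<in> {0..T} \<Longrightarrow> 0 \<le> conv i (\<lambda>y. gap i y t) x"
  using gap_nonneg closure_subset by (intro conv_nonneg) blast

lemma gap_forcing_ge:
  assumes x: "x \<in> closure \<Omega>" and t: "t \<in> {0..T}"
  shows "d i * conv i (\<lambda>y. gap i y t) x \<le> gap_forcing i x t"
    and "f i x t (U x t) - f i x t (\<rho> *\<^sub>R V x t) + Df_bound * gap i x t \<le> gap_forcing i x t"
    and "f i x t (\<rho> *\<^sub>R V x t) - \<rho> * f i x t (V x t) \<le> gap_forcing i x t"
    and "0 \<le> gap_forcing i x t"
proof -
  have "gap_forcing i x t = d i * conv i (\<lambda>y. gap i y t) x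
      + (rate - dstar i x - Df_bound) * gap i x t
      + (f i x t (U x t) - f i x t (\<rho> *\<^sub>R V x t) + Df_bound * gap i x t)
      + (f i x t (\<rho> *\<^sub>R V x t) - \<rho> * f i x t (V x t))"
    unfolding gap_forcing_def by (simp add: algebra_simps)
  moreover have "0 \<le> d i * conv i (\<lambda>y. gap i y t) x"
    using d_pos[of i] conv_gap_nonneg[OF t] by simp
  moreover have "0 \<le> (rate - dstar i x - Df_bound) * gap i x t"
    using dstar_le_rate[OF x, of i] gap_nonneg[OF x t, of i] by simp
  moreover note f_diff_ge[OF x t, of i] f_scaling_ge[OF x t, of i]
  ultimately show "d i * conv i (\<lambda>y. gap i y t) x \<le> gap_forcing i x t"
    and "f i x t (U x t) - f i x t (\<rho> *\<^sub>R V x t) + Df_bound * gap i x t \<le> gap_forcing i x t"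
    and "f i x t (\<rho> *\<^sub>R V x t) - \<rho> * f i x t (V x t) \<le> gap_forcing i x t"
    and "0 \<le> gap_forcing i x t"
    by linarith+
qed

lemma gap_supersolution:
  assumes x: "x \<in> closure \<Omega>"
  shows "periodic_supersolution T rate (gap i x) (\<lambda>t. gap_forcing i x t - rate * gap i x t)"
proof
  show "0 < T" "0 < rate"
    by (fact T_pos rate_pos)+
  show "continuous_on {0..T} (gap i x)" "gap i x 0 = gap i x T"
    by (fact gap_continuous[OF x] gap_periodic[OF x])+
  fix t
  show "t \<in> {0<..T} \<Longrightarrow> (gap i x has_real_derivative gap_forcing i x t - rate * gap i x t) (at t within {0..T})"
    by (rule gap_deriv[OF x])
  show "t \<in> {0..T} \<Longrightarrow> 0 \<le> gap i x t"
    by (rule gap_nonneg[OF x])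
  show "t \<in> {0<..T} \<Longrightarrow> 0 \<le> gap_forcing i x t - rate * gap i x t + rate * gap i x t"
    using gap_forcing_ge(4)[OF x, of t i] by simp
qed

lemma gap_positive_if_forcing_pos:
  assumes "x \<in> closure \<Omega>" "t \<in> {0<..T}" "0 < gap_forcing i x t"
  shows "gap_positive i x"
  unfolding gap_positive_def
  using periodic_supersolution.pos_if_forcing_pos[OF gap_supersolution[OF assms(1)] assms(2)] assms(3)
  by simp

lemma conv_gap_eq_0:
  assumes x: "x \<in> closure \<Omega>" and "\<not> gap_positive i x" and t: "t \<in> {0<..T}"
  shows "conv i (\<lambda>y. gap i y t) x = 0"
proof -
  have "gap_forcing i x t \<le> 0"
    using gap_positive_if_forcing_pos[OF x t] assms(2) by force
  then have "d i * conv i (\<lambda>y. gap i y t) x \<le> 0"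
    using gap_forcing_ge(1)[of x t i] x t by simp
  then show ?thesis
    using d_pos[of i] conv_gap_nonneg[of t i x] t by (simp add: mult_le_0_iff)
qed

lemma conv_gap_pos:
  assumes x: "x \<in> closure \<Omega>" and t: "t \<in> {0<..T}"
    and J_pos: "\<And>y. y \<in> ball z r \<Longrightarrow> J i x y > 0"
    and not_null: "\<not> (AE y in lebesgue. y \<in> \<Omega> \<inter> ball z r \<longrightarrow> \<not> gap_positive i y)"
  shows "conv i (\<lambda>y. gap i y t) x > 0"
proof (rule conv_pos[OF _ gap_integrable[OF x t] J_pos])
  have t': "t \<in> {0..T}"
    using t by simp
  show "0 \<le> gap i y t" if "y \<in> \<Omega>" for y
    using gap_nonneg[OF _ t'] closure_subset that by blast
  show "\<not> (AE y in lebesgue. y \<in> \<Omega> \<inter> ball z r \<longrightarrow> gap i y t = 0)"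
  proof
    assume "AE y in lebesgue. y \<in> \<Omega> \<inter> ball z r \<longrightarrow> gap i y t = 0"
    then have "AE y in lebesgue. y \<in> \<Omega> \<inter> ball z r \<longrightarrow> \<not> gap_positive i y"
      by (rule eventually_mono) (use t' in \<open>auto simp: gap_positive_def intro!: bexI[of _ t]\<close>)
    with not_null show False ..
  qed
qed

lemma conv_gap_continuous: "t \<in> {0<..T} \<Longrightarrow> continuous_on (closure \<Omega>) (conv i (\<lambda>y. gap i y t))"
proof (rule conv_continuous[where M = bound])
  assume t: "t \<in> {0<..T}"
  then have t': "t \<in> {0..T}"
    by simp
  show "\<bar>gap i y t\<bar> \<le> bound" if "y \<in> \<Omega>" for y
  proof -
    have "y \<in> closure \<Omega>"
      using closure_subset that by blast
    then show ?thesis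
      using gap_nonneg[OF _ t', of y i] gap_le_bound[OF _ t', of y i] by simp
  qed
  show "set_integrable lebesgue \<Omega> (\<lambda>y. J i x y * gap i y t)" if "x \<in> closure \<Omega>" for x
    using gap_integrable[OF that t] .
qed

lemma open_positive_set_null: "open {x. positive_set_null_near i x}"
  unfolding open_contains_ball
proof safe
  fix x assume "positive_set_null_near i x"
  then obtain r where r: "r > 0" "AE y in lebesgue. y \<in> \<Omega> \<inter> ball x r \<longrightarrow> \<not> gap_positive i y"
    unfolding positive_set_null_near_def by blast
  have "positive_set_null_near i x'" if x': "x' \<in> ball x r" for x'
  proof -
    have sub: "ball x' (r - dist x x') \<subseteq> ball x r"
      by (simp add: ball_subset_ball_iff dist_commute)
    have "AE y in lebesgue. y \<in> \<Omega> \<inter> ball x' (r - dist x x') \<longrightarrow> \<not> gap_positive i y"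
      using r(2) by (rule eventually_mono) (use sub in blast)
    moreover have "r - dist x x' > 0"
      using x' by simp
    ultimately show ?thesis
      unfolding positive_set_null_near_def by blast
  qed
  with r(1) show "\<exists>e>0. ball x e \<subseteq> {x. positive_set_null_near i x}"
    by blast
qed

lemma not_null_near_if_positive_cover:
  assumes G: "open G" "G \<subseteq> \<Omega>" "x \<in> G" and cover: "\<And>y. y \<in> G \<Longrightarrow> \<exists>j\<in>A. gap_positive j y"
  shows "\<exists>j\<in>A. \<not> positive_set_null_near j x"
proof (rule ccontr)
  assume all_null: "\<not> ?thesis"
  have "\<exists>r>0. \<forall>j\<in>A. AE y in lebesgue. y \<in> \<Omega> \<inter> ball x r \<longrightarrow> \<not> gap_positive j y"
  proof (rule ex_pos_common_finite)
    show "\<exists>r>0. AE y in lebesgue. y \<in> \<Omega> \<inter> ball x r \<longrightarrow> \<not> gap_positive j y" if "j \<in> A" for j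
      using all_null that unfolding positive_set_null_near_def by blast
    show "AE y in lebesgue. y \<in> \<Omega> \<inter> ball x r' \<longrightarrow> \<not> gap_positive j y"
      if "AE y in lebesgue. y \<in> \<Omega> \<inter> ball x r \<longrightarrow> \<not> gap_positive j y" "0 < r'" "r' \<le> r"
      for j r r'
      using that(1) by (rule eventually_mono) (use that(3) in auto)
  qed simp
  then obtain r where r: "r > 0"
    and "\<forall>j\<in>A. AE y in lebesgue. y \<in> \<Omega> \<inter> ball x r \<longrightarrow> \<not> gap_positive j y"
    by blast
  then have null: "AE y in lebesgue. \<forall>j\<in>A. y \<in> \<Omega> \<inter> ball x r \<longrightarrow> \<not> gap_positive j y"
    by (intro eventually_ball_finite) simp_all
  have "AE y in lebesgue. y \<notin> G \<inter> ball x r"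
  proof (rule eventually_mono[OF null], rule notI)
    fix y assume "\<forall>j\<in>A. y \<in> \<Omega> \<inter> ball x r \<longrightarrow> \<not> gap_positive j y" and y: "y \<in> G \<inter> ball x r"
    moreover obtain j where "j \<in> A" "gap_positive j y"
      using cover y by blast
    ultimately show False
      using G(2) by blast
  qed
  moreover have "open (G \<inter> ball x r)" "G \<inter> ball x r \<noteq> {}"
    using G r by auto
  ultimately show False
    using not_AE_lebesgue_notin_open by blast
qed

lemma gap_positive_near:
  assumes x: "x \<in> \<Omega>" and pos: "conv i (\<lambda>y. gap i y T) x > 0"
  obtains e where "e > 0" "ball x e \<subseteq> \<Omega>" "\<And>y. y \<in> ball x e \<Longrightarrow> gap_positive i y"
proof -
  have T: "T \<in> {0<..T}"
    using T_pos by simp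
  have x_cl: "x \<in> closure \<Omega>"
    using x closure_subset by blast
  obtain e1 where e1: "e1 > 0" "\<forall>y\<in>closure \<Omega>. dist y x < e1 \<longrightarrow>
      dist (conv i (\<lambda>y. gap i y T) y) (conv i (\<lambda>y. gap i y T) x) < conv i (\<lambda>y. gap i y T) x"
    using continuous_on_iff[THEN iffD1, rule_format, OF conv_gap_continuous[OF T] x_cl pos] by blast
  obtain e2 where e2: "e2 > 0" "ball x e2 \<subseteq> \<Omega>"
    using dom(1) x open_contains_ball by blast
  have "gap_positive i y" if y: "y \<in> ball x (min e1 e2)" for y
  proof (rule ccontr)
    assume not_pos: "\<not> gap_positive i y"
    have "y \<in> ball x e2"
      using y by simp
    then have y_cl: "y \<in> closure \<Omega>"
      using e2(2) closure_subset by blast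
    have "dist y x < e1"
      using y by (simp add: dist_commute)
    then have
      "dist (conv i (\<lambda>y. gap i y T) y) (conv i (\<lambda>y. gap i y T) x) < conv i (\<lambda>y. gap i y T) x"
      using e1(2) y_cl by blast
    moreover have "conv i (\<lambda>y. gap i y T) y = 0"
      by (rule conv_gap_eq_0[OF y_cl not_pos T])
    ultimately show False
      by (simp add: dist_real_def)
  qed
  moreover have "ball x (min e1 e2) \<subseteq> \<Omega>"
    using e2(2) by auto
  ultimately show thesis
    using that[of "min e1 e2"] e1(1) e2(1) by simp
qed

lemma open_positive_set_not_null: "open {x \<in> \<Omega>. \<not> positive_set_null_near i x}"
  unfolding open_contains_ball
proof safe
  fix x assume x: "x \<in> \<Omega>" and not_null: "\<not> positive_set_null_near i x"
  have T: "T \<in> {0<..T}"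
    using T_pos by simp
  obtain r where r: "r > 0" "\<And>y. y \<in> ball x r \<Longrightarrow> J i x y > 0"
    using J_pos_near_diag by blast
  have x_cl: "x \<in> closure \<Omega>"
    using x closure_subset by blast
  have "\<not> (AE y in lebesgue. y \<in> \<Omega> \<inter> ball x r \<longrightarrow> \<not> gap_positive i y)"
    using not_null r(1) unfolding positive_set_null_near_def by blast
  with x_cl T r(2) have "conv i (\<lambda>y. gap i y T) x > 0"
    by (rule conv_gap_pos)
  then obtain e where e: "e > 0" "ball x e \<subseteq> \<Omega>" "\<And>y. y \<in> ball x e \<Longrightarrow> gap_positive i y"
    using gap_positive_near[OF x] by blast
  then have "\<not> positive_set_null_near i y" if "y \<in> ball x e" for y
    using not_null_near_if_positive_cover[of "ball x e" y "{i}"] that by auto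
  with e show "\<exists>e>0. ball x e \<subseteq> {x \<in> \<Omega>. \<not> positive_set_null_near i x}"
    by blast
qed

lemma positive_set_null_dichotomy:
  "(\<forall>x\<in>\<Omega>. positive_set_null_near i x) \<or> (\<forall>x\<in>\<Omega>. \<not> positive_set_null_near i x)"
  using connectedD[OF dom(2) open_positive_set_null open_positive_set_not_null] by auto

lemma conv_gap_end_pos:
  assumes not_null: "\<forall>y\<in>\<Omega>. \<not> positive_set_null_near i y" and x: "x \<in> closure \<Omega>"
  shows "conv i (\<lambda>y. gap i y T) x > 0"
proof -
  have T: "T \<in> {0<..T}"
    using T_pos by simp
  obtain r where r: "r > 0" "\<And>y. y \<in> ball x r \<Longrightarrow> J i x y > 0"
    using J_pos_near_diag by blast
  obtain z where z: "z \<in> \<Omega>" "dist z x < r / 2"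
    using x r(1) closure_approachable half_gt_zero by blast
  have J_pos: "J i x y > 0" if "y \<in> ball z (r / 2)" for y
  proof -
    have "ball z (r / 2) \<subseteq> ball x r"
      using z(2) by (simp add: ball_subset_ball_iff)
    then show ?thesis
      using r(2) that by blast
  qed
  have "\<not> (AE y in lebesgue. y \<in> \<Omega> \<inter> ball z (r / 2) \<longrightarrow> \<not> gap_positive i y)"
    using not_null z(1) half_gt_zero[OF r(1)] unfolding positive_set_null_near_def by blast
  with x T J_pos show ?thesis
    by (rule conv_gap_pos)
qed

text \<open>The lower bound at the end of the period propagates backwards by
  \<open>exp (- rate * T) * gap i y T \<le> gap i y t\<close>.\<close>
lemma conv_gap_uniform_pos:
  assumes "\<forall>y\<in>\<Omega>. \<not> positive_set_null_near i y"
  obtains c where "c > 0" "\<And>x t. x \<in> closure \<Omega> \<Longrightarrow> t \<in> {0<..T} \<Longrightarrow> c \<le> conv i (\<lambda>y. gap i y t) x"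
proof -
  have T: "T \<in> {0<..T}"
    using T_pos by simp
  have "closure \<Omega> \<noteq> {}"
    using dom(4) by simp
  then obtain xm where xm: "xm \<in> closure \<Omega>"
    "\<And>x. x \<in> closure \<Omega> \<Longrightarrow> conv i (\<lambda>y. gap i y T) xm \<le> conv i (\<lambda>y. gap i y T) x"
    using continuous_attains_inf[OF compact_closure_Omega _ conv_gap_continuous[OF T]] by blast
  define c where "c = exp (- rate * T) * conv i (\<lambda>y. gap i y T) xm"
  show thesis
  proof (rule that)
    show "c > 0"
      unfolding c_def using conv_gap_end_pos[OF assms xm(1)] by simp
    fix x t assume x: "x \<in> closure \<Omega>" and t: "t \<in> {0<..T}"
    have "c \<le> exp (- rate * T) * conv i (\<lambda>y. gap i y T) x"
      unfolding c_def using xm(2)[OF x] by simp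
    also have "\<dots> = conv i (\<lambda>y. exp (- rate * T) * gap i y T) x"
      by (rule conv_cmult[symmetric])
    also have "\<dots> \<le> conv i (\<lambda>y. gap i y t) x"
    proof (rule conv_mono)
      show "set_integrable lebesgue \<Omega> (\<lambda>y. J i x y * (exp (- rate * T) * gap i y T))"
        using set_integrable_mult_right[OF gap_integrable[OF x T], of "exp (- rate * T)"]
        by (simp add: mult.left_commute)
      show "set_integrable lebesgue \<Omega> (\<lambda>y. J i x y * gap i y t)"
        by (rule gap_integrable[OF x t])
      have t': "t \<in> {0..T}"
        using t by simp
      show "exp (- rate * T) * gap i y T \<le> gap i y t" if "y \<in> \<Omega>" for y
      proof -
        have "y \<in> closure \<Omega>"
          using closure_subset that by blast
        then show ?thesis
          by (rule periodic_supersolution.exp_end_value_le[OF gap_supersolution t'])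
      qed
    qed
    finally show "c \<le> conv i (\<lambda>y. gap i y t) x" .
  qed
qed

lemma gap_uniform_pos:
  assumes "\<forall>y\<in>\<Omega>. \<not> positive_set_null_near i y"
  shows "\<exists>\<delta>>0. \<forall>x\<in>closure \<Omega>. \<forall>t\<in>{0..T}. \<delta> \<le> gap i x t"
proof -
  obtain c where c: "c > 0" "\<And>x t. x \<in> closure \<Omega> \<Longrightarrow> t \<in> {0<..T} \<Longrightarrow> c \<le> conv i (\<lambda>y. gap i y t) x"
    using conv_gap_uniform_pos[OF assms] by blast
  define a where "a = d i * c"
  have a: "a > 0"
    unfolding a_def using d_pos[of i] c(1) by simp
  define \<delta> where "\<delta> = exp (- rate * T) * (a * T / (exp (rate * T) - 1))"
  have "\<delta> > 0"
    unfolding \<delta>_def using a T_pos rate_pos by simp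
  moreover have "\<delta> \<le> gap i x t" if x: "x \<in> closure \<Omega>" and t: "t \<in> {0..T}" for x t
    unfolding \<delta>_def
  proof (rule periodic_supersolution.lower_bound_if_forcing_ge[OF gap_supersolution[OF x] a _ t])
    fix s assume s: "s \<in> {0<..T}"
    have "a \<le> d i * conv i (\<lambda>y. gap i y s) x"
      unfolding a_def using c(2)[OF x s] d_pos[of i] by simp
    also have "\<dots> \<le> gap_forcing i x s"
      using gap_forcing_ge(1)[OF x] s by simp
    finally show "a \<le> gap_forcing i x s - rate * gap i x s + rate * gap i x s"
      by simp
  qed
  ultimately show ?thesis
    by blast
qed

lemma some_gap_positive:
  assumes x: "x \<in> closure \<Omega>"
  shows "\<exists>j. gap_positive j x"
proof (cases "\<rho> = 0")
  case True
  then show ?thesis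
    using solution_component_pos[of U x] x unfolding gap_positive_def gap_def by simp
next
  case False
  have T: "T \<in> {0..T}" "T \<in> {0<..T}"
    using T_pos by auto
  have "vgt (\<chi> j. f j x T (\<rho> *\<^sub>R V x T)) (\<rho> *\<^sub>R (\<chi> j. f j x T (V x T)))"
    using False rho_nonneg rho_less_one x T solution_pos[of V] by (intro F3) auto
  then obtain j where "\<rho> * f j x T (V x T) \<le> f j x T (\<rho> *\<^sub>R V x T)"
    "f j x T (\<rho> *\<^sub>R V x T) \<noteq> \<rho> * f j x T (V x T)"
    unfolding vgt_def vge_def by (auto simp: vec_eq_iff)
  then have "\<rho> * f j x T (V x T) < f j x T (\<rho> *\<^sub>R V x T)"
    by (metis order_less_le)
  then have "0 < gap_forcing j x T"
    using gap_forcing_ge(3)[OF x T(1), of j] by linarith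
  then show ?thesis
    using gap_positive_if_forcing_pos[OF x T(2)] by blast
qed

lemma exists_component_not_null: "\<exists>j. \<exists>x\<in>\<Omega>. \<not> positive_set_null_near j x"
proof -
  obtain x where x: "x \<in> \<Omega>"
    using dom(4) by blast
  have "\<exists>j\<in>UNIV. \<not> positive_set_null_near j x"
    using some_gap_positive closure_subset dom(1) x
    by (intro not_null_near_if_positive_cover[of \<Omega>]) blast+
  with x show ?thesis
    by blast
qed

lemma coupling_lower_bound_near:
  fixes I :: "'m set"
  assumes "I \<noteq> {}" "I \<noteq> UNIV"
  obtains x0 t0 c \<eta> where "x0 \<in> closure \<Omega>" "t0 \<in> {0..T}" "c > 0" "\<eta> > 0"
    "\<And>x t u. x \<in> closure \<Omega> \<Longrightarrow> t \<in> {0..T} \<Longrightarrow> u \<in> value_box \<Longrightarrow> dist (x, t) (x0, t0) < \<eta> \<Longrightarrow>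
       c \<le> (\<Sum>j\<in>-I. \<Sum>k\<in>I. Df j k x t u)"
proof -
  obtain x0 t0 where x0: "x0 \<in> closure \<Omega>" and t0: "t0 \<in> {0..T}"
    and irreducible: "\<And>u. u \<in> nonneg_orthant \<Longrightarrow> irreducible_matrix (\<lambda>i k. Df i k x0 t0 u)"
    using F2 by blast
  define \<Phi> where "\<Phi> p = (\<Sum>j\<in>-I. \<Sum>k\<in>I. Df j k (fst (fst p)) (snd (fst p)) (snd p))"
    for p :: "((real^'n) \<times> real) \<times> (real^'m)"
  have "continuous_on ((closure \<Omega> \<times> {0..T}) \<times> value_box)
      (\<lambda>p. (\<lambda>(x,t,u). Df j k x t u) (fst (fst p), snd (fst p), snd p))" for j k
    by (rule continuous_on_compose2[OF F1_Dcont]) (auto intro!: continuous_intros simp: value_box_def)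
  then have "continuous_on ((closure \<Omega> \<times> {0..T}) \<times> value_box) \<Phi>"
    unfolding \<Phi>_def by (intro continuous_intros) simp
  moreover have "0 < \<Phi> ((x0, t0), u)" if "u \<in> value_box" for u
  proof -
    have u: "u \<in> nonneg_orthant"
      using value_box_nonneg[OF that] .
    have "0 < (\<Sum>j\<in>-I. \<Sum>k\<in>I. Df j k x0 t0 u)"
      using F1_coop[OF x0 t0 u] by (intro irreducible_block_sum_pos[OF irreducible[OF u] assms]) auto
    then show ?thesis
      by (simp add: \<Phi>_def)
  qed
  moreover have "compact (closure \<Omega> \<times> {0..T})" "(x0, t0) \<in> closure \<Omega> \<times> {0..T}"
    using compact_closure_Omega x0 t0 by (auto intro: compact_Times)
  ultimately obtain c \<eta> where c: "c > 0" and \<eta>: "\<eta> > 0" and near: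
    "\<And>b u. b \<in> closure \<Omega> \<times> {0..T} \<Longrightarrow> u \<in> value_box \<Longrightarrow> dist b (x0, t0) < \<eta> \<Longrightarrow> c \<le> \<Phi> (b, u)"
    using uniform_pos_near_compact[OF _ compact_value_box] by metis
  show thesis
  proof (rule that[OF x0 t0 c \<eta>])
    fix x t u
    assume "x \<in> closure \<Omega>" "t \<in> {0..T}" "u \<in> value_box" "dist (x, t) (x0, t0) < \<eta>"
    then show "c \<le> (\<Sum>j\<in>-I. \<Sum>k\<in>I. Df j k x t u)"
      using near[of "(x, t)" u] by (simp add: \<Phi>_def)
  qed
qed

lemma coupling_forces_positive_gap:
  assumes x: "x \<in> closure \<Omega>" and t: "t \<in> {0<..T}" and \<delta>: "\<delta> > 0"
    and uniform: "\<And>k. k \<in> I \<Longrightarrow> \<delta> \<le> gap k x t"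
    and coupling: "\<And>u. u \<in> value_box \<Longrightarrow> 0 < (\<Sum>j\<in>-I. \<Sum>k\<in>I. Df j k x t u)"
  shows "\<exists>j\<in>-I. gap_positive j x"
proof -
  have t': "t \<in> {0..T}"
    using t by simp
  obtain p where p: "p \<in> value_box"
    and eq: "(\<Sum>j\<in>-I. f j x t (U x t) - f j x t (\<rho> *\<^sub>R V x t))
      = (\<Sum>j\<in>-I. \<Sum>k\<in>UNIV. Df j k x t p * gap k x t)"
    by (rule f_diff_eq_Df_sum[OF x t'])
  have row: "- Df_bound * gap j x t + \<delta> * (\<Sum>k\<in>I. Df j k x t p)
      \<le> (\<Sum>k\<in>UNIV. Df j k x t p * gap k x t)" if j: "j \<in> -I" for j
  proof -
    have "\<delta> * (\<Sum>k\<in>I. Df j k x t p) = (\<Sum>k\<in>I. Df j k x t p * \<delta>)"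
      by (simp add: sum_distrib_left mult.commute)
    also have "\<dots> \<le> (\<Sum>k\<in>I. Df j k x t p * gap k x t)"
      using j uniform
      by (intro sum_mono mult_left_mono F1_coop[OF x t' value_box_nonneg[OF p]]) auto
    finally show ?thesis
      using Df_row_ge[OF x t' p, of j I] j by simp
  qed
  have "0 < \<delta> * (\<Sum>j\<in>-I. \<Sum>k\<in>I. Df j k x t p)"
    using \<delta> coupling[OF p] by simp
  also have "\<dots> = (\<Sum>j\<in>-I. - Df_bound * gap j x t + \<delta> * (\<Sum>k\<in>I. Df j k x t p))
      + (\<Sum>j\<in>-I. Df_bound * gap j x t)"
    by (simp add: sum.distrib sum_distrib_left sum_subtractf)
  also have "\<dots> \<le> (\<Sum>j\<in>-I. f j x t (U x t) - f j x t (\<rho> *\<^sub>R V x t))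
      + (\<Sum>j\<in>-I. Df_bound * gap j x t)"
    unfolding eq using row by (intro add_right_mono sum_mono) auto
  also have "\<dots> = (\<Sum>j\<in>-I. f j x t (U x t) - f j x t (\<rho> *\<^sub>R V x t) + Df_bound * gap j x t)"
    by (simp add: sum.distrib)
  finally obtain j where "j \<in> -I" and "0 < f j x t (U x t) - f j x t (\<rho> *\<^sub>R V x t) + Df_bound * gap j x t"
    by (meson not_le sum_nonpos)
  then show ?thesis
    using gap_forcing_ge(2)[OF x t', of j] gap_positive_if_forcing_pos[OF x t] by force
qed

lemma gaps_uniform_pos:
  assumes "\<And>k x. k \<in> I \<Longrightarrow> x \<in> \<Omega> \<Longrightarrow> \<not> positive_set_null_near k x"
  shows "\<exists>\<delta>>0. \<forall>k\<in>I. \<forall>x\<in>closure \<Omega>. \<forall>t\<in>{0..T}. \<delta> \<le> gap k x t"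
proof (rule ex_pos_common_finite[where P = "\<lambda>k \<delta>. \<forall>x\<in>closure \<Omega>. \<forall>t\<in>{0..T}. \<delta> \<le> gap k x t"])
  show "finite I"
    by simp
  show "\<exists>\<delta>>0. \<forall>x\<in>closure \<Omega>. \<forall>t\<in>{0..T}. \<delta> \<le> gap k x t" if "k \<in> I" for k
    using assms that by (intro gap_uniform_pos) blast
  show "\<forall>x\<in>closure \<Omega>. \<forall>t\<in>{0..T}. \<delta>' \<le> gap k x t"
    if "\<forall>x\<in>closure \<Omega>. \<forall>t\<in>{0..T}. \<delta> \<le> gap k x t" "0 < \<delta>'" "\<delta>' \<le> \<delta>" for k \<delta> \<delta>'
    using that(1) order_trans[OF that(3)] by blast
qed

lemma coupled_component_not_null:
  assumes "I \<noteq> {}" "I \<noteq> UNIV" and I_not_null: "\<And>k x. k \<in> I \<Longrightarrow> x \<in> \<Omega> \<Longrightarrow> \<not> positive_set_null_near k x"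
  shows "\<exists>j\<in>-I. \<exists>x\<in>\<Omega>. \<not> positive_set_null_near j x"
proof -
  obtain \<delta> where \<delta>: "\<delta> > 0" "\<forall>k\<in>I. \<forall>x\<in>closure \<Omega>. \<forall>t\<in>{0..T}. \<delta> \<le> gap k x t"
    using gaps_uniform_pos[OF I_not_null] by blast
  obtain x0 t0 c \<eta> where x0: "x0 \<in> closure \<Omega>" and t0: "t0 \<in> {0..T}" and c: "c > 0" and \<eta>: "\<eta> > 0"
    and near: "\<And>x t u. x \<in> closure \<Omega> \<Longrightarrow> t \<in> {0..T} \<Longrightarrow> u \<in> value_box \<Longrightarrow>
      dist (x, t) (x0, t0) < \<eta> \<Longrightarrow> c \<le> (\<Sum>j\<in>-I. \<Sum>k\<in>I. Df j k x t u)"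
    using coupling_lower_bound_near[OF assms(1,2)] by blast
  define t1 where "t1 = (if t0 > 0 then t0 else min T (\<eta> / 2))"
  have t1: "t1 \<in> {0<..T}" "dist t1 t0 \<le> \<eta> / 2"
    using t0 T_pos \<eta> unfolding t1_def by (auto simp: dist_real_def)
  define G where "G = \<Omega> \<inter> ball x0 (\<eta> / 2)"
  obtain x where x: "x \<in> \<Omega>" "dist x x0 < \<eta> / 2"
    using x0 \<eta> closure_approachable half_gt_zero by blast
  have "\<exists>j\<in>-I. gap_positive j y" if y: "y \<in> G" for y
  proof (rule coupling_forces_positive_gap[OF _ t1(1) \<delta>(1)])
    show y_cl: "y \<in> closure \<Omega>"
      using y closure_subset unfolding G_def by blast
    show "\<delta> \<le> gap k y t1" if "k \<in> I" for k
      using \<delta>(2) that y_cl t1(1) by simp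
    have "dist (y, t1) (x0, t0) \<le> dist y x0 + dist t1 t0"
      unfolding dist_Pair_Pair by (intro sqrt_sum_squares_le_sum zero_le_dist)
    also have "\<dots> < \<eta>"
      using y t1(2) unfolding G_def by (simp add: dist_commute)
    finally have "dist (y, t1) (x0, t0) < \<eta>" .
    moreover have "t1 \<in> {0..T}"
      using t1(1) by simp
    ultimately show "0 < (\<Sum>j\<in>-I. \<Sum>k\<in>I. Df j k y t1 u)" if "u \<in> value_box" for u
      using near[OF y_cl _ that] c by fastforce
  qed
  moreover have "open G" "G \<subseteq> \<Omega>" "x \<in> G"
    using dom(1) x unfolding G_def by (auto simp: dist_commute)
  ultimately show ?thesis
    using not_null_near_if_positive_cover[of G x "-I"] by blast
qed

lemma all_components_not_null: "\<forall>x\<in>\<Omega>. \<not> positive_set_null_near i x"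
proof -
  define I where "I = {i. \<forall>x\<in>\<Omega>. \<not> positive_set_null_near i x}"
  have in_I: "j \<in> I" if "x \<in> \<Omega>" "\<not> positive_set_null_near j x" for j x
    using positive_set_null_dichotomy[of j] that unfolding I_def by blast
  have "I \<noteq> {}"
    using exists_component_not_null in_I by blast
  have "I = UNIV"
  proof (rule ccontr)
    assume "I \<noteq> UNIV"
    then obtain j x where "j \<in> -I" "x \<in> \<Omega>" "\<not> positive_set_null_near j x"
      using coupled_component_not_null[OF \<open>I \<noteq> {}\<close>] unfolding I_def by blast
    then show False
      using in_I by blast
  qed
  then show ?thesis
    unfolding I_def by blast
qed

lemma scale_improvable: "\<exists>\<epsilon>>0. \<forall>x\<in>closure \<Omega>. \<forall>t\<in>{0..T}. \<forall>i. (\<rho> + \<epsilon>) * V x t $ i \<le> U x t $ i"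
proof -
  have "\<exists>\<delta>>0. \<forall>i\<in>UNIV. \<forall>x\<in>closure \<Omega>. \<forall>t\<in>{0..T}. \<delta> \<le> gap i x t"
    by (rule gaps_uniform_pos) (use all_components_not_null in blast)
  then obtain \<delta> where \<delta>: "\<delta> > 0" "\<forall>i. \<forall>x\<in>closure \<Omega>. \<forall>t\<in>{0..T}. \<delta> \<le> gap i x t"
    by blast
  have "(\<rho> + \<delta> / bound) * V x t $ i \<le> U x t $ i" if "x \<in> closure \<Omega>" "t \<in> {0..T}" for x t i
  proof -
    have "\<delta> / bound * V x t $ i \<le> \<delta> / bound * bound"
      using component_le_bound[of V x t i] that \<delta>(1) bound_pos by (intro mult_left_mono) auto
    also have "\<dots> \<le> gap i x t"
      using \<delta>(2) that bound_pos by simp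
    finally show ?thesis
      unfolding gap_def by (simp add: algebra_simps)
  qed
  then show ?thesis
    using \<delta>(1) bound_pos by (intro exI[of _ "\<delta> / bound"]) auto
qed

end

section \<open>Comparison and uniqueness\<close>

context solution_pair
begin

definition admissible_scales :: "real set" where
  "admissible_scales =
     {\<rho>. 0 \<le> \<rho> \<and> \<rho> \<le> 1 \<and> (\<forall>x\<in>closure \<Omega>. \<forall>t\<in>{0..T}. \<forall>i. \<rho> * V x t $ i \<le> U x t $ i)}"

lemma zero_admissible_scale: "0 \<in> admissible_scales"
  unfolding admissible_scales_def using solution_component_pos[of U] by (simp add: less_imp_le)

lemma bdd_above_admissible_scales: "bdd_above admissible_scales"
  unfolding admissible_scales_def by (auto intro: bdd_aboveI[of _ 1])

lemma Sup_admissible_scales_mem: "Sup admissible_scales \<in> admissible_scales"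
proof -
  let ?\<rho> = "Sup admissible_scales"
  have nonempty: "admissible_scales \<noteq> {}"
    using zero_admissible_scale by blast
  have "0 \<le> ?\<rho>"
    by (rule cSup_upper[OF zero_admissible_scale bdd_above_admissible_scales])
  moreover have "?\<rho> \<le> 1"
    by (rule cSup_least[OF nonempty]) (simp add: admissible_scales_def)
  moreover have "?\<rho> * V x t $ i \<le> U x t $ i" if "x \<in> closure \<Omega>" "t \<in> {0..T}" for x t i
  proof -
    have V_pos: "V x t $ i > 0"
      using solution_component_pos[of V] that by simp
    have "?\<rho> \<le> U x t $ i / V x t $ i"
      by (rule cSup_least[OF nonempty])
        (use that V_pos in \<open>simp add: admissible_scales_def pos_le_divide_eq\<close>)
    then show ?thesis
      using V_pos by (simp add: pos_le_divide_eq)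
  qed
  ultimately show ?thesis
    unfolding admissible_scales_def by blast
qed

lemma Sup_admissible_scales_eq_1: "Sup admissible_scales = 1"
proof (rule ccontr)
  define \<rho> where "\<rho> = Sup admissible_scales"
  assume "Sup admissible_scales \<noteq> 1"
  have "\<rho> \<in> admissible_scales"
    unfolding \<rho>_def by (rule Sup_admissible_scales_mem)
  then have \<rho>: "0 \<le> \<rho>" "\<rho> \<le> 1"
    "\<And>x t i. x \<in> closure \<Omega> \<Longrightarrow> t \<in> {0..T} \<Longrightarrow> \<rho> * V x t $ i \<le> U x t $ i"
    unfolding admissible_scales_def by auto
  with \<open>Sup admissible_scales \<noteq> 1\<close> have "\<rho> < 1"
    unfolding \<rho>_def by simp
  with \<rho> interpret below: solution_pair_below \<Omega> T d J dstar f Df U V \<rho>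
    by unfold_locales auto
  obtain \<epsilon> where \<epsilon>: "\<epsilon> > 0"
    "\<And>x t i. x \<in> closure \<Omega> \<Longrightarrow> t \<in> {0..T} \<Longrightarrow> (\<rho> + \<epsilon>) * V x t $ i \<le> U x t $ i"
    using below.scale_improvable by blast
  have "min 1 (\<rho> + \<epsilon>) * V x t $ i \<le> U x t $ i" if "x \<in> closure \<Omega>" "t \<in> {0..T}" for x t i
  proof -
    have "min 1 (\<rho> + \<epsilon>) * V x t $ i \<le> (\<rho> + \<epsilon>) * V x t $ i"
      using solution_component_pos[of V x t i] that by (intro mult_right_mono) auto
    then show ?thesis
      using \<epsilon>(2)[OF that, of i] by linarith
  qed
  then have "min 1 (\<rho> + \<epsilon>) \<in> admissible_scales"
    unfolding admissible_scales_def using \<rho>(1) \<epsilon>(1) by simp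
  then have "min 1 (\<rho> + \<epsilon>) \<le> \<rho>"
    unfolding \<rho>_def by (rule cSup_upper[OF _ bdd_above_admissible_scales])
  with \<open>\<rho> < 1\<close> \<epsilon>(1) show False
    by simp
qed

lemma U_ge_V: "x \<in> closure \<Omega> \<Longrightarrow> t \<in> {0..T} \<Longrightarrow> vge (U x t) (V x t)"
  using Sup_admissible_scales_mem[unfolded Sup_admissible_scales_eq_1]
  unfolding admissible_scales_def vge_def by simp

end

theorem theorem4p4:
  fixes \<Omega> :: "(real^'n) set" and T :: real
    and d :: "'m::finite \<Rightarrow> real"
    and J :: "'m \<Rightarrow> real^'n \<Rightarrow> real^'n \<Rightarrow> real"
    and dstar :: "'m \<Rightarrow> real^'n \<Rightarrow> real"
    and f :: "'m \<Rightarrow> real^'n \<Rightarrow> real \<Rightarrow> real^'m \<Rightarrow> real"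
    and Df :: "'m \<Rightarrow> 'm \<Rightarrow> real^'n \<Rightarrow> real \<Rightarrow> real^'m \<Rightarrow> real"
    and U V :: "real^'n \<Rightarrow> real \<Rightarrow> real^'m"
  assumes dom: "open \<Omega>" "connected \<Omega>" "bounded \<Omega>" "\<Omega> \<noteq> {}"
    and T_pos: "T > 0"
    and d_pos: "\<And>i. d i > 0"
    and J_cont: "\<And>i. continuous_on UNIV (\<lambda>(x,y). J i x y)"
    and J_nonneg: "\<And>i x y. J i x y \<ge> 0"
    and J_diag: "\<And>i x. J i x x > 0"
    and J_int: "\<And>i x. integrable lebesgue (\<lambda>y. J i x y)
                        \<and> (\<integral>y. J i x y \<partial>lebesgue) = 1"
    and dstar_def: "\<And>i. dstar i = (\<lambda>x. d i)
                       \<or> dstar i = (\<lambda>x. d i * (LINT y:\<Omega>|lebesgue. J i y x))"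
    \<comment> \<open>(F1)\<close>
    and F1_per: "\<And>i x t u. f i x (t + T) u = f i x t u"
    and F1_zero: "\<And>i x t. f i x t 0 = 0"
    and F1_cont: "\<And>i. continuous_on (closure \<Omega> \<times> {0..T} \<times> nonneg_orthant)
                         (\<lambda>(x,t,u). f i x t u)"
    and F1_Dcont: "\<And>i k. continuous_on (closure \<Omega> \<times> {0..T} \<times> nonneg_orthant)
                         (\<lambda>(x,t,u). Df i k x t u)"
    and F1_deriv: "\<And>i x t u. x \<in> closure \<Omega> \<Longrightarrow> t \<in> {0..T} \<Longrightarrow> u \<in> nonneg_orthant \<Longrightarrow>
                     (f i x t has_derivative (\<lambda>h. \<Sum>k\<in>UNIV. Df i k x t u * h $ k))
                       (at u within nonneg_orthant)"
    and F1_coop: "\<And>i k x t u. x \<in> closure \<Omega> \<Longrightarrow> t \<in> {0..T} \<Longrightarrow> u \<in> nonneg_orthant \<Longrightarrow>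
                     k \<noteq> i \<Longrightarrow> Df i k x t u \<ge> 0"
    \<comment> \<open>(F2)\<close>
    and F2: "\<exists>x0\<in>closure \<Omega>. \<exists>t0\<in>{0..T}. \<forall>u\<in>nonneg_orthant.
               irreducible_matrix (\<lambda>i k. Df i k x0 t0 u)"
    \<comment> \<open>(F3)\<close>
    and F3: "\<And>\<rho> x t u. 0 < \<rho> \<Longrightarrow> \<rho> < 1 \<Longrightarrow> x \<in> closure \<Omega> \<Longrightarrow> t \<in> {0..T} \<Longrightarrow>
               vgg u 0 \<Longrightarrow> vgt (\<chi> i. f i x t (\<rho> *\<^sub>R u)) (\<rho> *\<^sub>R (\<chi> i. f i x t u))"
    \<comment> \<open>two bounded positive solutions in Z^m\<close>
    and U_Z: "Z_space \<Omega> T U" and U_sol: "is_periodic_solution \<Omega> T d J dstar f U"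
    and U_bp: "bounded_positive \<Omega> T U"
    and V_Z: "Z_space \<Omega> T V" and V_sol: "is_periodic_solution \<Omega> T d J dstar f V"
    and V_bp: "bounded_positive \<Omega> T V"
  shows "\<forall>x\<in>closure \<Omega>. \<forall>t\<in>{0..T}. U x t = V x t"
proof -
  interpret UV: solution_pair \<Omega> T d J dstar f Df U V
    by unfold_locales (fact assms)+
  interpret VU: solution_pair \<Omega> T d J dstar f Df V U
    by unfold_locales (fact assms)+
  show ?thesis
    using UV.U_ge_V VU.U_ge_V by (auto simp: vge_def vec_eq_iff intro: antisym)
qed

end
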